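(* Let $A$ be a noetherian ring and let $E$ be a finitely generated $A$-module. For each prime ideal $\mathfrak{p} \subset A$, let a submodule $J(\mathfrak{p}) \subset E_{\mathfrak{p}}$ be given. There exists a submodule $F\subset E$ such that $F_{\mathfrak{p}} = J(\mathfrak{p})$ for all primes $\mathfrak{p}\subset A$ if and only if both of the following conditions hold: (Consistency) For all primes $\mathfrak{p} \subset \mathfrak{q} \subset A$, we have $J(\mathfrak{p}) = J(\mathfrak{q})_{\mathfrak{p} A_{\mathfrak{q}}} = A_{\mathfrak{p}}\otimes_{A_{\mathfrak{q}}} J(\mathfrak{q})$ as submodules of $E_{\mathfrak{p}}$. (Finiteness) The set $\mathfrak{A}$ of all primes $\mathfrak{p}\subset A$ for which $\mathfrak{p} A_{\mathfrak{p}}$ is an associated prime of the $A_{\mathfrak{p}}$-module $E_{\mathfrak{p}}/J(\mathfrak{p})$ is finite. Moreover, when such $F$ exists it is unique, and $\mathrm{Ass}_A(E/F) = \mathfrak{A}$.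
   Context: For primes $\mathfrak{p}\subset\mathfrak{q}$, $E_{\mathfrak{p}}$ is identified with the localization of the $A_{\mathfrak{q}}$-module $E_{\mathfrak{q}}$ at $\mathfrak{p}A_{\mathfrak{q}}$, and $J(\mathfrak{q})_{\mathfrak{p}A_{\mathfrak{q}}}$ denotes the localization of $J(\mathfrak{q})$, viewed as a submodule of $E_{\mathfrak{p}}$. $\mathrm{Ass}_A(M)$ denotes the set of associated primes of an $A$-module $M$. *)

theory Defs
  imports "HOL-Algebra.Algebra"
begin

definition loc_cls :: "('a,'c) ring_scheme \<Rightarrow> 'a set \<Rightarrow> 'a \<Rightarrow> 'a \<Rightarrow> ('a \<times> 'a) set" where
  "loc_cls R P a s = {(b,t). b \<in> carrier R \<and> t \<in> carrier R - P \<and>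
      (\<exists>u \<in> carrier R - P. u \<otimes>\<^bsub>R\<^esub> ((t \<otimes>\<^bsub>R\<^esub> a) \<ominus>\<^bsub>R\<^esub> (s \<otimes>\<^bsub>R\<^esub> b)) = \<zero>\<^bsub>R\<^esub>)}"

definition loc_ring :: "('a,'c) ring_scheme \<Rightarrow> 'a set \<Rightarrow> ('a \<times> 'a) set ring" where
  "loc_ring R P = \<lparr>carrier = {loc_cls R P a s | a s. a \<in> carrier R \<and> s \<in> carrier R - P},
     monoid.mult = (\<lambda>U V. {z. \<exists>a s b t. (a,s) \<in> U \<and> (b,t) \<in> V \<and>
                  z \<in> loc_cls R P (a \<otimes>\<^bsub>R\<^esub> b) (s \<otimes>\<^bsub>R\<^esub> t)}),
     one = loc_cls R P \<one>\<^bsub>R\<^esub> \<one>\<^bsub>R\<^esub>,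
     ring.zero = loc_cls R P \<zero>\<^bsub>R\<^esub> \<one>\<^bsub>R\<^esub>,
     add = (\<lambda>U V. {z. \<exists>a s b t. (a,s) \<in> U \<and> (b,t) \<in> V \<and>
                  z \<in> loc_cls R P ((t \<otimes>\<^bsub>R\<^esub> a) \<oplus>\<^bsub>R\<^esub> (s \<otimes>\<^bsub>R\<^esub> b)) (s \<otimes>\<^bsub>R\<^esub> t)})\<rparr>"

definition mloc_cls :: "('a,'c) ring_scheme \<Rightarrow> ('a,'b,'d) module_scheme \<Rightarrow> 'a set \<Rightarrow> 'b \<Rightarrow> 'a \<Rightarrow> ('b \<times> 'a) set" where
  "mloc_cls R M P m s = {(n,t). n \<in> carrier M \<and> t \<in> carrier R - P \<and>
      (\<exists>u \<in> carrier R - P. u \<odot>\<^bsub>M\<^esub> ((t \<odot>\<^bsub>M\<^esub> m) \<ominus>\<^bsub>M\<^esub> (s \<odot>\<^bsub>M\<^esub> n)) = \<zero>\<^bsub>M\<^esub>)}"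

definition loc_module :: "('a,'c) ring_scheme \<Rightarrow> ('a,'b,'d) module_scheme \<Rightarrow> 'a set
    \<Rightarrow> (('a \<times> 'a) set, ('b \<times> 'a) set) module" where
  "loc_module R M P = \<lparr>carrier = {mloc_cls R M P m s | m s. m \<in> carrier M \<and> s \<in> carrier R - P},
     monoid.mult = (\<lambda>_ _. undefined),
     one = undefined,
     ring.zero = mloc_cls R M P \<zero>\<^bsub>M\<^esub> \<one>\<^bsub>R\<^esub>,
     add = (\<lambda>U V. {z. \<exists>m s n t. (m,s) \<in> U \<and> (n,t) \<in> V \<and>
                  z \<in> mloc_cls R M P ((t \<odot>\<^bsub>M\<^esub> m) \<oplus>\<^bsub>M\<^esub> (s \<odot>\<^bsub>M\<^esub> n)) (s \<otimes>\<^bsub>R\<^esub> t)}),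
     smult = (\<lambda>U V. {z. \<exists>a s m t. (a,s) \<in> U \<and> (m,t) \<in> V \<and>
                  z \<in> mloc_cls R M P (a \<odot>\<^bsub>M\<^esub> m) (s \<otimes>\<^bsub>R\<^esub> t)})\<rparr>"

definition loc_sub :: "('a,'c) ring_scheme \<Rightarrow> ('a,'b,'d) module_scheme \<Rightarrow> 'a set \<Rightarrow> 'b set
    \<Rightarrow> ('b \<times> 'a) set set" where
  "loc_sub R M P F = {mloc_cls R M P m s | m s. m \<in> F \<and> s \<in> carrier R - P}"

definition ext_ideal :: "('a,'c) ring_scheme \<Rightarrow> 'a set \<Rightarrow> 'a set \<Rightarrow> ('a \<times> 'a) set set" where
  "ext_ideal R P I = genideal (loc_ring R P) ((\<lambda>a. loc_cls R P a \<one>\<^bsub>R\<^esub>) ` I)"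

text \<open>Canonical maps A_Q \<rightarrow> A_P and E_Q \<rightarrow> E_P for P \<subseteq> Q
  (these realise the identification A_P = (A_Q)_{PA_Q}, E_P = (E_Q)_{PA_Q}).\<close>

definition ring_locmap :: "('a,'c) ring_scheme \<Rightarrow> 'a set \<Rightarrow> ('a \<times> 'a) set \<Rightarrow> ('a \<times> 'a) set" where
  "ring_locmap R P U = {z. \<exists>a s. (a,s) \<in> U \<and> z \<in> loc_cls R P a s}"

definition mod_locmap :: "('a,'c) ring_scheme \<Rightarrow> ('a,'b,'d) module_scheme \<Rightarrow> 'a set
    \<Rightarrow> ('b \<times> 'a) set \<Rightarrow> ('b \<times> 'a) set" where
  "mod_locmap R M P U = {z. \<exists>m s. (m,s) \<in> U \<and> z \<in> mloc_cls R M P m s}"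

text \<open>For P \<subseteq> Q and a submodule N of E_Q: the localisation N_{PA_Q}, viewed inside E_P,
  i.e. the elements t^{-1} x with x \<in> N and t \<in> A_Q - PA_Q.\<close>

definition loc_sub_at :: "('a,'c) ring_scheme \<Rightarrow> ('a,'b,'d) module_scheme \<Rightarrow> 'a set \<Rightarrow> 'a set
    \<Rightarrow> ('b \<times> 'a) set set \<Rightarrow> ('b \<times> 'a) set set" where
  "loc_sub_at R M P Q N =
     {(inv\<^bsub>loc_ring R P\<^esub> (ring_locmap R P t)) \<odot>\<^bsub>loc_module R M P\<^esub> (mod_locmap R M P x) | t x.
        t \<in> carrier (loc_ring R Q) - ext_ideal R Q P \<and> x \<in> N}"

text \<open>Associated primes of the quotient module M/N (over the ring R):
  primes of the form Ann(x + N) = {a. a x \<in> N}.\<close>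

definition ass_quot :: "('a,'c) ring_scheme \<Rightarrow> ('a,'b,'d) module_scheme \<Rightarrow> 'b set \<Rightarrow> 'a set set" where
  "ass_quot R M N = {P. primeideal P R \<and>
      (\<exists>x \<in> carrier M. P = {a \<in> carrier R. a \<odot>\<^bsub>M\<^esub> x \<in> N})}"

definition fin_gen_module :: "('a,'c) ring_scheme \<Rightarrow> ('a,'b,'d) module_scheme \<Rightarrow> bool" where
  "fin_gen_module R M \<longleftrightarrow> (\<exists>S. finite S \<and> S \<subseteq> carrier M \<and>
      (\<forall>H. submodule H R M \<and> S \<subseteq> H \<longrightarrow> H = carrier M))"

end

theory Submission
  imports Defs
begin

text \<open>For a prime \<open>p\<close> let \<open>F\<^sub>p = contr p (J p) = {x \<in> E. x/1 \<in> J(p)}\<close>. It is a submodule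
  saturated with respect to \<open>A - p\<close>, it localises to \<open>J(p)\<close>, and \<open>p A\<^sub>p\<close> is associated to
  \<open>E\<^sub>p/J(p)\<close> iff \<open>p\<close> is associated to \<open>E/F\<^sub>p\<close>. If \<open>F\<close> realises \<open>J\<close>, then \<open>F\<^sub>p\<close> is the
  \<open>p\<close>-saturation of \<open>F\<close>; since \<open>p\<close> is associated to \<open>E/F\<close> iff it is associated to \<open>E\<close> modulo
  the \<open>p\<close>-saturation of \<open>F\<close>, this gives \<open>Ass(E/F) = \<AA>\<close>, which is finite because \<open>E\<close> is finitely
  generated over a noetherian ring; consistency is transitivity of localisation. Uniqueness: an
  element of \<open>F - F'\<close> has a multiple whose annihilator modulo \<open>F'\<close> is a prime \<open>r\<close>, yet \<open>F\<close> and
  \<open>F'\<close> have the same \<open>r\<close>-saturation.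

  Conversely, given consistency and finiteness, \<open>F = \<Inter>{F\<^sub>r | r \<in> \<AA>}\<close> works. Consistency says
  that \<open>F\<^sub>p\<close> is the \<open>p\<close>-saturation of \<open>F\<^sub>q\<close> for \<open>p \<subseteq> q\<close>; hence every prime annihilator of
  \<open>E/F\<^sub>q\<close> lies in \<open>\<AA>\<close>, which yields \<open>F \<subseteq> F\<^sub>q\<close>. For the reverse inclusion after
  \<open>p\<close>-saturation one uses that a prime ideal which is a finite intersection of ideals equals one
  of them.\<close>

section \<open>Localisation of a commutative ring at a prime\<close>

definition loc_ideal :: "('a,'c) ring_scheme \<Rightarrow> 'a set \<Rightarrow> 'a set \<Rightarrow> ('a \<times> 'a) set set" where
  "loc_ideal R q I = {loc_cls R q a s | a s. a \<in> I \<and> s \<in> carrier R - q}"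

context cring
begin

lemma one_notin_prime: "primeideal p R \<Longrightarrow> \<one> \<notin> p"
  using ideal.one_imp_carrier primeideal.I_notcarr primeideal.axioms(1) by blast

lemma prime_subset_carrier: "primeideal p R \<Longrightarrow> p \<subseteq> carrier R"
  by (meson additive_subgroup.a_subset ideal.axioms(1) primeideal.axioms(1))

lemma one_in_prime_compl: "primeideal p R \<Longrightarrow> \<one> \<in> carrier R - p"
  using one_notin_prime by auto

lemma prime_compl_mult_closed:
  "primeideal p R \<Longrightarrow> s \<in> carrier R - p \<Longrightarrow> t \<in> carrier R - p \<Longrightarrow> s \<otimes> t \<in> carrier R - p"
  by (meson DiffD1 DiffD2 DiffI m_closed primeideal.I_prime)

lemma mult_notin_prime:
  "primeideal p R \<Longrightarrow> s \<in> carrier R \<Longrightarrow> t \<in> carrier R \<Longrightarrow> s \<notin> p \<Longrightarrow> t \<notin> p \<Longrightarrow> s \<otimes> t \<notin> p"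
  using prime_compl_mult_closed[of p s t] by auto

lemma loc_cls_char:
  assumes "a \<in> carrier R" "s \<in> carrier R"
  shows "loc_cls R p a s = {(b,t). b \<in> carrier R \<and> t \<in> carrier R - p \<and>
      (\<exists>u\<in>carrier R - p. u \<otimes> t \<otimes> a = u \<otimes> s \<otimes> b)}"
proof -
  have "(u \<otimes> (t \<otimes> a \<ominus> s \<otimes> b) = \<zero>) = (u \<otimes> t \<otimes> a = u \<otimes> s \<otimes> b)"
    if "u \<in> carrier R" "b \<in> carrier R" "t \<in> carrier R" for u b t
  proof -
    have "u \<otimes> (t \<otimes> a \<ominus> s \<otimes> b) = u \<otimes> t \<otimes> a \<ominus> u \<otimes> s \<otimes> b"
      using assms that by algebra
    then show ?thesis using assms that by simp
  qed
  then show ?thesis unfolding loc_cls_def by auto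
qed

lemma loc_cls_self:
  "primeideal p R \<Longrightarrow> a \<in> carrier R \<Longrightarrow> s \<in> carrier R - p \<Longrightarrow> (a,s) \<in> loc_cls R p a s"
  using loc_cls_char[of a s p] one_in_prime_compl[of p] by (auto intro!: bexI[of _ \<one>])

lemma loc_cls_memD:
  assumes "(a',s') \<in> loc_cls R p a s" "a \<in> carrier R" "s \<in> carrier R"
  shows "a' \<in> carrier R" "s' \<in> carrier R - p" "\<exists>u\<in>carrier R - p. u \<otimes> s' \<otimes> a = u \<otimes> s \<otimes> a'"
  using assms loc_cls_char[of a s p] by auto

lemma loc_cls_eq_iff:
  assumes P: "primeideal p R" and ab: "a \<in> carrier R" "b \<in> carrier R"
    and st: "s \<in> carrier R - p" "t \<in> carrier R - p"
  shows "loc_cls R p a s = loc_cls R p b t \<longleftrightarrow> (\<exists>u\<in>carrier R - p. u \<otimes> t \<otimes> a = u \<otimes> s \<otimes> b)"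
proof
  assume "loc_cls R p a s = loc_cls R p b t"
  then have "(b,t) \<in> loc_cls R p a s" using loc_cls_self[OF P ab(2) st(2)] by simp
  then show "\<exists>u\<in>carrier R - p. u \<otimes> t \<otimes> a = u \<otimes> s \<otimes> b" using loc_cls_char[of a s p] ab st by auto
next
  assume "\<exists>u\<in>carrier R - p. u \<otimes> t \<otimes> a = u \<otimes> s \<otimes> b"
  then obtain u where u: "u \<in> carrier R - p" and e1: "u \<otimes> t \<otimes> a = u \<otimes> s \<otimes> b" by blast
  have cu: "u \<in> carrier R" "s \<in> carrier R" "t \<in> carrier R" using u st by auto
  \<comment> \<open>transitivity of the relation defining \<open>loc_cls\<close>, with witness \<open>u' v s'\<close>\<close>
  have trans: "\<exists>w\<in>carrier R - p. w \<otimes> r \<otimes> b' = w \<otimes> t' \<otimes> c"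
    if "u' \<in> carrier R - p" and e: "u' \<otimes> t' \<otimes> a' = u' \<otimes> s' \<otimes> b'" and "v \<in> carrier R - p"
      and e': "v \<otimes> r \<otimes> a' = v \<otimes> s' \<otimes> c" and "a' \<in> carrier R" "b' \<in> carrier R" "c \<in> carrier R"
      "s' \<in> carrier R - p" "t' \<in> carrier R" "r \<in> carrier R"
    for u' v a' b' c s' t' r
  proof -
    have cr: "u' \<in> carrier R" "v \<in> carrier R" "s' \<in> carrier R" "a' \<in> carrier R" "b' \<in> carrier R"
      "c \<in> carrier R" "t' \<in> carrier R" "r \<in> carrier R" using that by auto
    have "(u' \<otimes> v \<otimes> s') \<otimes> r \<otimes> b' = (v \<otimes> r) \<otimes> (u' \<otimes> s' \<otimes> b')" using cr by algebra
    also have "\<dots> = (v \<otimes> r) \<otimes> (u' \<otimes> t' \<otimes> a')" by (simp only: e)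
    also have "\<dots> = (u' \<otimes> t') \<otimes> (v \<otimes> r \<otimes> a')" using cr by algebra
    also have "\<dots> = (u' \<otimes> t') \<otimes> (v \<otimes> s' \<otimes> c)" by (simp only: e')
    also have "\<dots> = (u' \<otimes> v \<otimes> s') \<otimes> t' \<otimes> c" using cr by algebra
    finally show ?thesis
      using prime_compl_mult_closed[OF P prime_compl_mult_closed[OF P that(1,3)] that(8)] by blast
  qed
  show "loc_cls R p a s = loc_cls R p b t"
    unfolding loc_cls_char[OF ab(1) cu(2)] loc_cls_char[OF ab(2) cu(3)]
    using trans[OF u e1 _ _ ab] trans[OF u e1[symmetric] _ _ ab(2,1)] st ab by auto
qed

lemma loc_cls_eqI:
  assumes "primeideal p R" "a \<in> carrier R" "b \<in> carrier R" "s \<in> carrier R - p" "t \<in> carrier R - p"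
    and "t \<otimes> a = s \<otimes> b"
  shows "loc_cls R p a s = loc_cls R p b t"
  using assms loc_cls_eq_iff[of p a b s t] one_in_prime_compl[OF assms(1)] by (auto intro!: bexI[of _ \<one>])

lemma loc_ring_carrier_iff:
  "x \<in> carrier (loc_ring R p) \<longleftrightarrow> (\<exists>a s. a \<in> carrier R \<and> s \<in> carrier R - p \<and> x = loc_cls R p a s)"
  by (auto simp: loc_ring_def)

lemma loc_ring_carrierE:
  assumes "x \<in> carrier (loc_ring R p)"
  obtains a s where "a \<in> carrier R" "s \<in> carrier R" "s \<notin> p" "x = loc_cls R p a s"
  using assms loc_ring_carrier_iff by blast

lemma loc_cls_in_carrier: "a \<in> carrier R \<Longrightarrow> s \<in> carrier R - p \<Longrightarrow> loc_cls R p a s \<in> carrier (loc_ring R p)"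
  using loc_ring_carrier_iff by blast

lemma loc_ring_one: "\<one>\<^bsub>loc_ring R p\<^esub> = loc_cls R p \<one> \<one>"
  by (simp add: loc_ring_def)

lemma loc_ring_zero: "\<zero>\<^bsub>loc_ring R p\<^esub> = loc_cls R p \<zero> \<one>"
  by (simp add: loc_ring_def)

lemma loc_mult_cls:
  assumes P: "primeideal p R" and c: "a \<in> carrier R" "b \<in> carrier R" "s \<in> carrier R - p" "t \<in> carrier R - p"
  shows "loc_cls R p a s \<otimes>\<^bsub>loc_ring R p\<^esub> loc_cls R p b t = loc_cls R p (a \<otimes> b) (s \<otimes> t)"
proof -
  have wd: "loc_cls R p (a' \<otimes> b') (s' \<otimes> t') = loc_cls R p (a \<otimes> b) (s \<otimes> t)"
    if h: "(a',s') \<in> loc_cls R p a s" "(b',t') \<in> loc_cls R p b t" for a' s' b' t'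
  proof -
    obtain u where u: "u \<in> carrier R - p" "u \<otimes> s' \<otimes> a = u \<otimes> s \<otimes> a'"
      using loc_cls_memD(3)[OF h(1)] c by auto
    obtain v where v: "v \<in> carrier R - p" "v \<otimes> t' \<otimes> b = v \<otimes> t \<otimes> b'"
      using loc_cls_memD(3)[OF h(2)] c by auto
    have cc: "a' \<in> carrier R" "s' \<in> carrier R - p" "b' \<in> carrier R" "t' \<in> carrier R - p"
      using loc_cls_memD[OF h(1)] loc_cls_memD[OF h(2)] c by auto
    have cr: "u \<in> carrier R" "v \<in> carrier R" "s \<in> carrier R" "t \<in> carrier R" "a' \<in> carrier R"
      "s' \<in> carrier R" "b' \<in> carrier R" "t' \<in> carrier R" using u v c cc by auto
    have "(u \<otimes> v) \<otimes> (s \<otimes> t) \<otimes> (a' \<otimes> b') = (u \<otimes> s \<otimes> a') \<otimes> (v \<otimes> t \<otimes> b')"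
      using cr c(1,2) by algebra
    also have "\<dots> = (u \<otimes> s' \<otimes> a) \<otimes> (v \<otimes> t' \<otimes> b)" using u v by simp
    also have "\<dots> = (u \<otimes> v) \<otimes> (s' \<otimes> t') \<otimes> (a \<otimes> b)" using cr c(1,2) by algebra
    finally show ?thesis
      using loc_cls_eq_iff[OF P, of "a' \<otimes> b'" "a \<otimes> b" "s' \<otimes> t'" "s \<otimes> t"]
        prime_compl_mult_closed[OF P] u v c cc by (meson m_closed)
  qed
  show ?thesis
    unfolding loc_ring_def by simp (use wd loc_cls_self[OF P c(1) c(3)] loc_cls_self[OF P c(2) c(4)] in blast)
qed

lemma loc_add_cls:
  assumes P: "primeideal p R" and c: "a \<in> carrier R" "b \<in> carrier R" "s \<in> carrier R - p" "t \<in> carrier R - p"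
  shows "loc_cls R p a s \<oplus>\<^bsub>loc_ring R p\<^esub> loc_cls R p b t = loc_cls R p (t \<otimes> a \<oplus> s \<otimes> b) (s \<otimes> t)"
proof -
  have wd: "loc_cls R p (t' \<otimes> a' \<oplus> s' \<otimes> b') (s' \<otimes> t') = loc_cls R p (t \<otimes> a \<oplus> s \<otimes> b) (s \<otimes> t)"
    if h: "(a',s') \<in> loc_cls R p a s" "(b',t') \<in> loc_cls R p b t" for a' s' b' t'
  proof -
    obtain u where u: "u \<in> carrier R - p" "u \<otimes> s' \<otimes> a = u \<otimes> s \<otimes> a'"
      using loc_cls_memD(3)[OF h(1)] c by auto
    obtain v where v: "v \<in> carrier R - p" "v \<otimes> t' \<otimes> b = v \<otimes> t \<otimes> b'"
      using loc_cls_memD(3)[OF h(2)] c by auto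
    have cc: "a' \<in> carrier R" "s' \<in> carrier R - p" "b' \<in> carrier R" "t' \<in> carrier R - p"
      using loc_cls_memD[OF h(1)] loc_cls_memD[OF h(2)] c by auto
    have cr: "u \<in> carrier R" "v \<in> carrier R" "s \<in> carrier R" "t \<in> carrier R" "a' \<in> carrier R"
      "s' \<in> carrier R" "b' \<in> carrier R" "t' \<in> carrier R" using u v c cc by auto
    have "(u \<otimes> v) \<otimes> (s \<otimes> t) \<otimes> (t' \<otimes> a' \<oplus> s' \<otimes> b')
        = (t \<otimes> t' \<otimes> v) \<otimes> (u \<otimes> s \<otimes> a') \<oplus> (s \<otimes> s' \<otimes> u) \<otimes> (v \<otimes> t \<otimes> b')"
      using cr c(1,2) by algebra
    also have "\<dots> = (t \<otimes> t' \<otimes> v) \<otimes> (u \<otimes> s' \<otimes> a) \<oplus> (s \<otimes> s' \<otimes> u) \<otimes> (v \<otimes> t' \<otimes> b)"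
      using u v by simp
    also have "\<dots> = (u \<otimes> v) \<otimes> (s' \<otimes> t') \<otimes> (t \<otimes> a \<oplus> s \<otimes> b)" using cr c(1,2) by algebra
    finally have E: "(u \<otimes> v) \<otimes> (s \<otimes> t) \<otimes> (t' \<otimes> a' \<oplus> s' \<otimes> b')
        = (u \<otimes> v) \<otimes> (s' \<otimes> t') \<otimes> (t \<otimes> a \<oplus> s \<otimes> b)" .
    have "t' \<otimes> a' \<oplus> s' \<otimes> b' \<in> carrier R" "t \<otimes> a \<oplus> s \<otimes> b \<in> carrier R" using cr c by auto
    moreover have "s' \<otimes> t' \<in> carrier R - p" "s \<otimes> t \<in> carrier R - p" "u \<otimes> v \<in> carrier R - p"
      using prime_compl_mult_closed[OF P] u v cc c by auto
    ultimately show ?thesis using loc_cls_eq_iff[OF P] E by blast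
  qed
  show ?thesis
    unfolding loc_ring_def by simp (use wd loc_cls_self[OF P c(1) c(3)] loc_cls_self[OF P c(2) c(4)] in blast)
qed

lemma cring_loc_ring:
  assumes P: "primeideal p R"
  shows "cring (loc_ring R p)"
proof -
  note ops = loc_add_cls[OF P] loc_mult_cls[OF P] mult_notin_prime[OF P] loc_ring_zero loc_ring_one
  have eqI: "loc_cls R p a s = loc_cls R p b t"
    if "t \<otimes> a = s \<otimes> b" "a \<in> carrier R" "b \<in> carrier R" "s \<in> carrier R - p" "t \<in> carrier R - p"
    for a b s t using loc_cls_eqI[OF P] that by blast
  show ?thesis
  proof (rule cringI[OF abelian_groupI comm_monoidI])
    fix x y assume "x \<in> carrier (loc_ring R p)" "y \<in> carrier (loc_ring R p)"
    then obtain a s b t where x: "a \<in> carrier R" "s \<in> carrier R" "s \<notin> p" "x = loc_cls R p a s"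
      and y: "b \<in> carrier R" "t \<in> carrier R" "t \<notin> p" "y = loc_cls R p b t"
      by (elim loc_ring_carrierE)
    show "x \<oplus>\<^bsub>loc_ring R p\<^esub> y \<in> carrier (loc_ring R p)"
         "x \<otimes>\<^bsub>loc_ring R p\<^esub> y \<in> carrier (loc_ring R p)"
      using x y by (auto simp: ops intro!: loc_cls_in_carrier)
    have "t \<otimes> a \<oplus> s \<otimes> b = s \<otimes> b \<oplus> t \<otimes> a" "s \<otimes> t = t \<otimes> s" "a \<otimes> b = b \<otimes> a"
      using x(1,2) y(1,2) by algebra+
    then show "x \<oplus>\<^bsub>loc_ring R p\<^esub> y = y \<oplus>\<^bsub>loc_ring R p\<^esub> x"
         and "x \<otimes>\<^bsub>loc_ring R p\<^esub> y = y \<otimes>\<^bsub>loc_ring R p\<^esub> x"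
      using x y by (simp_all add: ops)
  next
    fix x y z assume "x \<in> carrier (loc_ring R p)" "y \<in> carrier (loc_ring R p)" "z \<in> carrier (loc_ring R p)"
    then obtain a s b t c u where x: "a \<in> carrier R" "s \<in> carrier R" "s \<notin> p" "x = loc_cls R p a s"
      and y: "b \<in> carrier R" "t \<in> carrier R" "t \<notin> p" "y = loc_cls R p b t"
      and z: "c \<in> carrier R" "u \<in> carrier R" "u \<notin> p" "z = loc_cls R p c u"
      by (elim loc_ring_carrierE)
    have "u \<otimes> (t \<otimes> a \<oplus> s \<otimes> b) \<oplus> s \<otimes> t \<otimes> c = t \<otimes> u \<otimes> a \<oplus> s \<otimes> (u \<otimes> b \<oplus> t \<otimes> c)"
      "s \<otimes> t \<otimes> u = s \<otimes> (t \<otimes> u)" "a \<otimes> b \<otimes> c = a \<otimes> (b \<otimes> c)"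
      using x(1,2) y(1,2) z(1,2) by algebra+
    then show "x \<oplus>\<^bsub>loc_ring R p\<^esub> y \<oplus>\<^bsub>loc_ring R p\<^esub> z = x \<oplus>\<^bsub>loc_ring R p\<^esub> (y \<oplus>\<^bsub>loc_ring R p\<^esub> z)"
         and "x \<otimes>\<^bsub>loc_ring R p\<^esub> y \<otimes>\<^bsub>loc_ring R p\<^esub> z = x \<otimes>\<^bsub>loc_ring R p\<^esub> (y \<otimes>\<^bsub>loc_ring R p\<^esub> z)"
      using x y z by (simp_all add: ops)
    have "(s \<otimes> u \<otimes> (t \<otimes> u)) \<otimes> ((t \<otimes> a \<oplus> s \<otimes> b) \<otimes> c) = (s \<otimes> t \<otimes> u) \<otimes> (t \<otimes> u \<otimes> (a \<otimes> c) \<oplus> s \<otimes> u \<otimes> (b \<otimes> c))"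
      using x(1,2) y(1,2) z(1,2) by algebra
    then show "(x \<oplus>\<^bsub>loc_ring R p\<^esub> y) \<otimes>\<^bsub>loc_ring R p\<^esub> z
                = x \<otimes>\<^bsub>loc_ring R p\<^esub> z \<oplus>\<^bsub>loc_ring R p\<^esub> y \<otimes>\<^bsub>loc_ring R p\<^esub> z"
      using x y z by (simp add: ops, intro eqI) (auto simp: ops)
  next
    fix x assume "x \<in> carrier (loc_ring R p)"
    then obtain a s where x: "a \<in> carrier R" "s \<in> carrier R" "s \<notin> p" "x = loc_cls R p a s"
      by (rule loc_ring_carrierE)
    show "\<zero>\<^bsub>loc_ring R p\<^esub> \<oplus>\<^bsub>loc_ring R p\<^esub> x = x" "\<one>\<^bsub>loc_ring R p\<^esub> \<otimes>\<^bsub>loc_ring R p\<^esub> x = x"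
      using x one_notin_prime[OF P] by (simp_all add: ops)
    have "s \<otimes> \<ominus> a \<oplus> s \<otimes> a = \<zero>" using x(1,2) by algebra
    then have "loc_cls R p (\<ominus> a) s \<oplus>\<^bsub>loc_ring R p\<^esub> x = \<zero>\<^bsub>loc_ring R p\<^esub>"
      using x one_notin_prime[OF P] by (simp add: ops, intro eqI) (auto simp: ops)
    then show "\<exists>y\<in>carrier (loc_ring R p). y \<oplus>\<^bsub>loc_ring R p\<^esub> x = \<zero>\<^bsub>loc_ring R p\<^esub>"
      using x loc_cls_in_carrier[of "\<ominus> a" s p] by auto
  qed (simp_all add: loc_ring_zero loc_ring_one loc_cls_in_carrier[OF _ one_in_prime_compl[OF P]])
qed

lemma loc_a_inv_cls:
  assumes P: "primeideal p R" and c: "a \<in> carrier R" "s \<in> carrier R - p"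
  shows "\<ominus>\<^bsub>loc_ring R p\<^esub> loc_cls R p a s = loc_cls R p (\<ominus> a) s"
proof -
  interpret L: cring "loc_ring R p" by (rule cring_loc_ring[OF P])
  have "s \<otimes> \<ominus> a \<oplus> s \<otimes> a = \<zero>" using c(1) DiffD1[OF c(2)] by algebra
  then have "loc_cls R p (\<ominus> a) s \<oplus>\<^bsub>loc_ring R p\<^esub> loc_cls R p a s = \<zero>\<^bsub>loc_ring R p\<^esub>"
    using c one_in_prime_compl[OF P]
    by (simp add: loc_add_cls[OF P] loc_ring_zero prime_compl_mult_closed[OF P], intro loc_cls_eqI[OF P])
      (auto simp: mult_notin_prime[OF P])
  then show ?thesis using c by (intro L.minus_equality) (auto intro: loc_cls_in_carrier)
qed

lemma loc_inv_cls:
  assumes P: "primeideal p R" and c: "a \<in> carrier R - p" "s \<in> carrier R - p"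
  shows "inv\<^bsub>loc_ring R p\<^esub> loc_cls R p a s = loc_cls R p s a"
proof -
  interpret L: cring "loc_ring R p" by (rule cring_loc_ring[OF P])
  have "loc_cls R p a s \<otimes>\<^bsub>loc_ring R p\<^esub> loc_cls R p s a = \<one>\<^bsub>loc_ring R p\<^esub>"
    using c one_in_prime_compl[OF P] m_comm[of a s]
    by (simp add: loc_mult_cls[OF P] loc_ring_one, intro loc_cls_eqI[OF P])
      (auto simp: mult_notin_prime[OF P])
  then show ?thesis using c by (intro L.comm_inv_char) (auto intro: loc_cls_in_carrier)
qed

lemma ideal_loc_ideal:
  assumes Q: "primeideal q R" and I: "ideal I R"
  shows "ideal (loc_ideal R q I) (loc_ring R q)"
proof -
  interpret L: cring "loc_ring R q" by (rule cring_loc_ring[OF Q])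
  have Ic: "I \<subseteq> carrier R" using ideal.Icarr[OF I] by blast
  have add_closed: "t \<otimes> a \<oplus> s \<otimes> b \<in> I" if "a \<in> I" "b \<in> I" "s \<in> carrier R" "t \<in> carrier R" for a b s t
    using that Ic by (simp add: ideal.I_l_closed[OF I] additive_subgroup.a_closed[OF ideal.axioms(1)[OF I]])
  show ?thesis
  proof (rule idealI[OF L.ring_axioms L.add.subgroupI], goal_cases)
    case 1 show ?case using Ic unfolding loc_ideal_def by (auto intro!: loc_cls_in_carrier)
  next
    case 2 show ?case
      using one_in_prime_compl[OF Q] additive_subgroup.zero_closed[OF ideal.axioms(1)[OF I]]
      unfolding loc_ideal_def by auto
  next
    case (3 x)
    then obtain a s where h: "a \<in> I" "s \<in> carrier R - q" "x = loc_cls R q a s"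
      unfolding loc_ideal_def by blast
    have "\<ominus>\<^bsub>loc_ring R q\<^esub> x = loc_cls R q (\<ominus> a) s" using loc_a_inv_cls[OF Q _ h(2)] h Ic by auto
    then show ?case
      using h additive_subgroup.a_inv_closed[OF ideal.axioms(1)[OF I]]
      unfolding loc_ideal_def a_inv_def by auto
  next
    case (4 x y)
    then obtain a s b t where h: "a \<in> I" "s \<in> carrier R - q" "x = loc_cls R q a s"
      "b \<in> I" "t \<in> carrier R - q" "y = loc_cls R q b t" unfolding loc_ideal_def by blast
    have "x \<oplus>\<^bsub>loc_ring R q\<^esub> y = loc_cls R q (t \<otimes> a \<oplus> s \<otimes> b) (s \<otimes> t)"
      using h Ic by (simp add: loc_add_cls[OF Q] subsetD)
    then show ?case
      using h prime_compl_mult_closed[OF Q h(2,5)] add_closed[of a b s t] unfolding loc_ideal_def by auto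
  next
    case (5 x y)
    then obtain a s b t where h: "a \<in> I" "s \<in> carrier R - q" "x = loc_cls R q a s"
        "b \<in> carrier R" "t \<in> carrier R" "t \<notin> q" "y = loc_cls R q b t"
      unfolding loc_ideal_def by (auto elim!: loc_ring_carrierE)
    then have "y \<otimes>\<^bsub>loc_ring R q\<^esub> x = loc_cls R q (b \<otimes> a) (t \<otimes> s)"
      using Ic by (simp add: loc_mult_cls[OF Q] subsetD)
    moreover have "b \<otimes> a \<in> I" "t \<otimes> s \<in> carrier R - q"
      using h ideal.I_l_closed[OF I] prime_compl_mult_closed[OF Q] by auto
    ultimately show ?case unfolding loc_ideal_def by blast
  next
    case (6 x y)
    then obtain a s b t where h: "a \<in> I" "s \<in> carrier R - q" "x = loc_cls R q a s"
        "b \<in> carrier R" "t \<in> carrier R" "t \<notin> q" "y = loc_cls R q b t"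
      unfolding loc_ideal_def by (auto elim!: loc_ring_carrierE)
    then have "x \<otimes>\<^bsub>loc_ring R q\<^esub> y = loc_cls R q (a \<otimes> b) (s \<otimes> t)"
      using Ic by (simp add: loc_mult_cls[OF Q] subsetD)
    moreover have "a \<otimes> b \<in> I" "s \<otimes> t \<in> carrier R - q"
      using h ideal.I_r_closed[OF I] prime_compl_mult_closed[OF Q] by auto
    ultimately show ?case unfolding loc_ideal_def by blast
  qed
qed

lemma loc_cls_in_loc_ideal_iff:
  assumes Q: "primeideal q R" and P: "primeideal p R" and pq: "p \<subseteq> q"
    and c: "a \<in> carrier R" "s \<in> carrier R - q"
  shows "loc_cls R q a s \<in> loc_ideal R q p \<longleftrightarrow> a \<in> p"
proof
  assume "loc_cls R q a s \<in> loc_ideal R q p"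
  then obtain b t where bt: "b \<in> p" "t \<in> carrier R - q" "loc_cls R q a s = loc_cls R q b t"
    unfolding loc_ideal_def by blast
  have bc: "b \<in> carrier R" using bt(1) prime_subset_carrier[OF P] by auto
  obtain u where u: "u \<in> carrier R - q" "u \<otimes> t \<otimes> a = u \<otimes> s \<otimes> b"
    using loc_cls_eq_iff[OF Q c(1) bc c(2) bt(2)] bt(3) by auto
  have "(u \<otimes> t) \<otimes> a \<in> p"
    using bt(1) u c bc ideal.I_l_closed[OF primeideal.axioms(1)[OF P]] by simp
  moreover have "u \<otimes> t \<in> carrier R - p" using prime_compl_mult_closed[OF Q u(1) bt(2)] pq by auto
  ultimately show "a \<in> p" using primeideal.I_prime[OF P, of "u \<otimes> t" a] c by auto
qed (use c in \<open>auto simp: loc_ideal_def\<close>)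

lemma ext_ideal_eq_loc_ideal:
  assumes Q: "primeideal q R" and I: "ideal I R"
  shows "ext_ideal R q I = loc_ideal R q I"
proof -
  interpret L: cring "loc_ring R q" by (rule cring_loc_ring[OF Q])
  have Ic: "I \<subseteq> carrier R" using ideal.Icarr[OF I] by blast
  have gens: "(\<lambda>a. loc_cls R q a \<one>) ` I \<subseteq> carrier (loc_ring R q)"
    using Ic one_in_prime_compl[OF Q] by (auto intro!: loc_cls_in_carrier)
  show ?thesis
  proof
    show "ext_ideal R q I \<subseteq> loc_ideal R q I" unfolding ext_ideal_def
      using one_in_prime_compl[OF Q]
      by (intro L.genideal_minimal[OF ideal_loc_ideal[OF Q I]]) (auto simp: loc_ideal_def)
  next
    show "loc_ideal R q I \<subseteq> ext_ideal R q I"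
    proof
      fix x assume "x \<in> loc_ideal R q I"
      then obtain a s where h: "a \<in> I" "s \<in> carrier R - q" "x = loc_cls R q a s"
        unfolding loc_ideal_def by blast
      \<comment> \<open>\<open>a/s = (1/s) (a/1)\<close>\<close>
      have "loc_cls R q \<one> s \<otimes>\<^bsub>loc_ring R q\<^esub> loc_cls R q a \<one> = x"
        using h Ic one_in_prime_compl[OF Q] by (auto simp: loc_mult_cls[OF Q])
      moreover have "loc_cls R q a \<one> \<in> ext_ideal R q I"
        unfolding ext_ideal_def using L.genideal_self[OF gens] h by auto
      moreover have "loc_cls R q \<one> s \<in> carrier (loc_ring R q)" using h by (auto intro: loc_cls_in_carrier)
      ultimately show "x \<in> ext_ideal R q I"
        using ideal.I_l_closed[OF L.genideal_ideal[OF gens]] unfolding ext_ideal_def by metis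
    qed
  qed
qed

lemma primeideal_loc_ideal:
  assumes P: "primeideal p R"
  shows "primeideal (loc_ideal R p p) (loc_ring R p)"
proof (rule primeidealI)
  show "ideal (loc_ideal R p p) (loc_ring R p)" by (rule ideal_loc_ideal[OF P primeideal.axioms(1)[OF P]])
  show "cring (loc_ring R p)" by (rule cring_loc_ring[OF P])
  have "loc_cls R p \<one> \<one> \<notin> loc_ideal R p p"
    using loc_cls_in_loc_ideal_iff[OF P P order_refl, of \<one> \<one>] one_in_prime_compl[OF P] by auto
  then show "carrier (loc_ring R p) \<noteq> loc_ideal R p p"
    using loc_cls_in_carrier[OF _ one_in_prime_compl[OF P]] by auto
next
  fix x y assume "x \<in> carrier (loc_ring R p)" "y \<in> carrier (loc_ring R p)"
    "x \<otimes>\<^bsub>loc_ring R p\<^esub> y \<in> loc_ideal R p p"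
  then obtain a s b t where h: "a \<in> carrier R" "s \<in> carrier R" "s \<notin> p" "x = loc_cls R p a s"
        "b \<in> carrier R" "t \<in> carrier R" "t \<notin> p" "y = loc_cls R p b t"
        "loc_cls R p (a \<otimes> b) (s \<otimes> t) \<in> loc_ideal R p p"
    by (auto elim!: loc_ring_carrierE simp: loc_mult_cls[OF P])
  then have "a \<otimes> b \<in> p"
    using loc_cls_in_loc_ideal_iff[OF P P order_refl, of "a \<otimes> b" "s \<otimes> t"] mult_notin_prime[OF P] by auto
  then have "a \<in> p \<or> b \<in> p" using primeideal.I_prime[OF P] h by auto
  then show "x \<in> loc_ideal R p p \<or> y \<in> loc_ideal R p p"
    using h loc_cls_in_loc_ideal_iff[OF P P order_refl] by auto
qed

lemma ring_locmap_cls: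
  assumes Q: "primeideal q R" and P: "primeideal p R" and pq: "p \<subseteq> q"
    and c: "a \<in> carrier R" "s \<in> carrier R - q"
  shows "ring_locmap R p (loc_cls R q a s) = loc_cls R p a s"
proof -
  have "loc_cls R p b t = loc_cls R p a s" if h: "(b,t) \<in> loc_cls R q a s" for b t
  proof -
    obtain u where u: "u \<in> carrier R - q" "u \<otimes> t \<otimes> a = u \<otimes> s \<otimes> b" "b \<in> carrier R" "t \<in> carrier R - q"
      using loc_cls_memD[OF h c(1)] c by auto
    then show ?thesis using loc_cls_eq_iff[OF P c(1) u(3), of s t] c pq by auto
  qed
  moreover have "(a,s) \<in> loc_cls R q a s" using loc_cls_self[OF Q c] .
  ultimately show ?thesis unfolding ring_locmap_def by blast
qed

lemma idealI2:
  assumes "I \<subseteq> carrier R" "\<zero> \<in> I" "\<And>a b. a \<in> I \<Longrightarrow> b \<in> I \<Longrightarrow> a \<oplus> b \<in> I"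
    "\<And>a x. a \<in> I \<Longrightarrow> x \<in> carrier R \<Longrightarrow> x \<otimes> a \<in> I"
  shows "ideal I R"
proof (rule idealI[OF ring_axioms add.subgroupI], goal_cases)
  case (3 a)
  then have "(\<ominus> \<one>) \<otimes> a \<in> I" using assms(4) by simp
  moreover have "(\<ominus> \<one>) \<otimes> a = \<ominus> a" using 3 assms(1) l_minus[of \<one> a] by auto
  ultimately show ?case by (simp add: a_inv_def)
next
  case (5 a x)
  then show ?case using assms by simp
next
  case (6 a x)
  then show ?case using assms m_comm[of a x] by auto
qed (use assms in auto)

lemma prime_eq_Inter_ideals:
  assumes "finite A"
  shows "(\<And>i. i \<in> A \<Longrightarrow> ideal (K i) R) \<Longrightarrow> primeideal r R \<Longrightarrow> r = carrier R \<inter> (\<Inter>i\<in>A. K i)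
    \<Longrightarrow> \<exists>i\<in>A. r = K i"
  using assms
proof (induction A rule: finite_induct)
  case empty
  then show ?case using one_notin_prime[OF empty(2)] by simp
next
  case (insert i A)
  define W where "W = carrier R \<inter> (\<Inter>j\<in>A. K j)"
  have Ki: "ideal (K i) R" using insert(4) by simp
  then have Kic: "K i \<subseteq> carrier R" by (rule additive_subgroup.a_subset[OF ideal.axioms(1)])
  have r: "r = K i \<inter> W" using insert(6) Kic unfolding W_def by auto
  show ?case
  proof (cases "W \<subseteq> r \<or> K i \<subseteq> r")
    case True
    then have "r = W \<or> r = K i" using r by auto
    moreover have "r = W \<Longrightarrow> \<exists>j\<in>A. r = K j" using insert.IH[OF _ insert(5)] insert(4) unfolding W_def by blast
    ultimately show ?thesis by auto
  next
    \<comment> \<open>then \<open>k x \<in> K i \<inter> W = r\<close> for some \<open>k \<in> K i - r\<close> and \<open>x \<in> W - r\<close>\<close>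
    case False
    then obtain k x where k: "k \<in> K i" "k \<notin> r" and x: "x \<in> W" "x \<notin> r" by auto
    have kx: "k \<in> carrier R" "x \<in> carrier R" using k x Kic unfolding W_def by auto
    have "k \<otimes> x \<in> K i" using ideal.I_r_closed[OF Ki(1) k(1) kx(2)] .
    moreover have "k \<otimes> x \<in> W"
      using x kx insert(4) ideal.I_l_closed unfolding W_def by fastforce
    ultimately have "k \<otimes> x \<in> r" using r by auto
    then show ?thesis using primeideal.I_prime[OF insert(5) kx] k x by auto
  qed
qed

end

section \<open>Localisation of a module\<close>

locale ring_module = module R M for R :: "'a ring" (structure) and M :: "('a,'b) module"
begin

lemma M_diff_eq_zero_iff: "x \<in> carrier M \<Longrightarrow> y \<in> carrier M \<Longrightarrow> x \<ominus>\<^bsub>M\<^esub> y = \<zero>\<^bsub>M\<^esub> \<longleftrightarrow> x = y"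
  by (metis a_minus_def M.add.inv_closed M.minus_equality M.r_neg M.minus_minus)

lemma smult_r_diff:
  "u \<in> carrier R \<Longrightarrow> x \<in> carrier M \<Longrightarrow> y \<in> carrier M \<Longrightarrow>
     u \<odot>\<^bsub>M\<^esub> (x \<ominus>\<^bsub>M\<^esub> y) = u \<odot>\<^bsub>M\<^esub> x \<ominus>\<^bsub>M\<^esub> u \<odot>\<^bsub>M\<^esub> y"
  by (simp add: a_minus_def smult_r_distr smult_r_minus)

lemma mloc_cls_char:
  assumes "m \<in> carrier M" "s \<in> carrier R"
  shows "mloc_cls R M p m s = {(n,t). n \<in> carrier M \<and> t \<in> carrier R - p \<and>
      (\<exists>u\<in>carrier R - p. (u \<otimes> t) \<odot>\<^bsub>M\<^esub> m = (u \<otimes> s) \<odot>\<^bsub>M\<^esub> n)}"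
proof -
  have "(u \<odot>\<^bsub>M\<^esub> (t \<odot>\<^bsub>M\<^esub> m \<ominus>\<^bsub>M\<^esub> s \<odot>\<^bsub>M\<^esub> n) = \<zero>\<^bsub>M\<^esub>) = ((u \<otimes> t) \<odot>\<^bsub>M\<^esub> m = (u \<otimes> s) \<odot>\<^bsub>M\<^esub> n)"
    if "u \<in> carrier R" "n \<in> carrier M" "t \<in> carrier R" for u n t
    using assms that by (simp add: smult_r_diff M_diff_eq_zero_iff smult_assoc1)
  then show ?thesis unfolding mloc_cls_def by auto
qed

lemma mloc_cls_self:
  "primeideal p R \<Longrightarrow> m \<in> carrier M \<Longrightarrow> s \<in> carrier R - p \<Longrightarrow> (m,s) \<in> mloc_cls R M p m s"
  using mloc_cls_char[of m s p] one_in_prime_compl[of p] by (auto intro!: bexI[of _ \<one>])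

lemma mloc_cls_memD:
  assumes "(m',s') \<in> mloc_cls R M p m s" "m \<in> carrier M" "s \<in> carrier R"
  shows "m' \<in> carrier M" "s' \<in> carrier R - p"
    "\<exists>u\<in>carrier R - p. (u \<otimes> s') \<odot>\<^bsub>M\<^esub> m = (u \<otimes> s) \<odot>\<^bsub>M\<^esub> m'"
  using assms mloc_cls_char[of m s p] by auto

lemma mloc_cls_eq_iff:
  assumes P: "primeideal p R" and mn: "m \<in> carrier M" "n \<in> carrier M"
    and st: "s \<in> carrier R - p" "t \<in> carrier R - p"
  shows "mloc_cls R M p m s = mloc_cls R M p n t \<longleftrightarrow>
    (\<exists>u\<in>carrier R - p. (u \<otimes> t) \<odot>\<^bsub>M\<^esub> m = (u \<otimes> s) \<odot>\<^bsub>M\<^esub> n)"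
proof
  assume "mloc_cls R M p m s = mloc_cls R M p n t"
  then have "(n,t) \<in> mloc_cls R M p m s" using mloc_cls_self[OF P mn(2) st(2)] by simp
  then show "\<exists>u\<in>carrier R - p. (u \<otimes> t) \<odot>\<^bsub>M\<^esub> m = (u \<otimes> s) \<odot>\<^bsub>M\<^esub> n"
    using mloc_cls_char[of m s p] mn st by auto
next
  assume "\<exists>u\<in>carrier R - p. (u \<otimes> t) \<odot>\<^bsub>M\<^esub> m = (u \<otimes> s) \<odot>\<^bsub>M\<^esub> n"
  then obtain u where u: "u \<in> carrier R - p" and e1: "(u \<otimes> t) \<odot>\<^bsub>M\<^esub> m = (u \<otimes> s) \<odot>\<^bsub>M\<^esub> n" by blast
  have trans: "\<exists>w\<in>carrier R - p. (w \<otimes> r) \<odot>\<^bsub>M\<^esub> n' = (w \<otimes> t') \<odot>\<^bsub>M\<^esub> c"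
    if "u' \<in> carrier R - p" and e: "(u' \<otimes> t') \<odot>\<^bsub>M\<^esub> m' = (u' \<otimes> s') \<odot>\<^bsub>M\<^esub> n'"
      and "v \<in> carrier R - p" and e': "(v \<otimes> r) \<odot>\<^bsub>M\<^esub> m' = (v \<otimes> s') \<odot>\<^bsub>M\<^esub> c"
      and "m' \<in> carrier M" "n' \<in> carrier M" "c \<in> carrier M"
      and "s' \<in> carrier R - p" "t' \<in> carrier R" "r \<in> carrier R"
    for u' v m' n' c s' t' r
  proof -
    have cr: "u' \<in> carrier R" "v \<in> carrier R" "s' \<in> carrier R" "t' \<in> carrier R" "r \<in> carrier R"
      using that by auto
    have cm: "m' \<in> carrier M" "n' \<in> carrier M" "c \<in> carrier M" using that by auto
    have "(u' \<otimes> v \<otimes> s' \<otimes> r) \<odot>\<^bsub>M\<^esub> n' = ((v \<otimes> r) \<otimes> (u' \<otimes> s')) \<odot>\<^bsub>M\<^esub> n'"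
      using cr by (metis m_assoc m_closed m_comm m_lcomm)
    also have "\<dots> = (v \<otimes> r) \<odot>\<^bsub>M\<^esub> ((u' \<otimes> t') \<odot>\<^bsub>M\<^esub> m')" using cr cm by (simp add: smult_assoc1 e)
    also have "\<dots> = ((u' \<otimes> t') \<otimes> (v \<otimes> r)) \<odot>\<^bsub>M\<^esub> m'" using cr cm by (simp add: smult_assoc1 m_comm)
    also have "\<dots> = (u' \<otimes> t') \<odot>\<^bsub>M\<^esub> ((v \<otimes> s') \<odot>\<^bsub>M\<^esub> c)" using cr cm by (simp add: smult_assoc1 e')
    also have "\<dots> = (u' \<otimes> v \<otimes> s' \<otimes> t') \<odot>\<^bsub>M\<^esub> c"
      using cr cm by (simp add: smult_assoc1 [symmetric] m_ac)
    finally show ?thesis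
      using prime_compl_mult_closed[OF P prime_compl_mult_closed[OF P that(1,3)] that(8)] by blast
  qed
  show "mloc_cls R M p m s = mloc_cls R M p n t"
    unfolding mloc_cls_char[OF mn(1) DiffD1[OF st(1)]] mloc_cls_char[OF mn(2) DiffD1[OF st(2)]]
    using trans[OF u e1 _ _ mn] trans[OF u e1[symmetric] _ _ mn(2,1)] st by auto
qed

lemma loc_module_carrier_iff:
  "x \<in> carrier (loc_module R M p) \<longleftrightarrow> (\<exists>m s. m \<in> carrier M \<and> s \<in> carrier R - p \<and> x = mloc_cls R M p m s)"
  by (auto simp: loc_module_def)

lemma mloc_cls_in_carrier:
  "m \<in> carrier M \<Longrightarrow> s \<in> carrier R - p \<Longrightarrow> mloc_cls R M p m s \<in> carrier (loc_module R M p)"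
  using loc_module_carrier_iff by blast

lemma loc_module_zero: "\<zero>\<^bsub>loc_module R M p\<^esub> = mloc_cls R M p \<zero>\<^bsub>M\<^esub> \<one>"
  by (simp add: loc_module_def)

lemma loc_module_add_cls:
  assumes P: "primeideal p R" and c: "m \<in> carrier M" "n \<in> carrier M" "s \<in> carrier R - p" "t \<in> carrier R - p"
  shows "mloc_cls R M p m s \<oplus>\<^bsub>loc_module R M p\<^esub> mloc_cls R M p n t
     = mloc_cls R M p (t \<odot>\<^bsub>M\<^esub> m \<oplus>\<^bsub>M\<^esub> s \<odot>\<^bsub>M\<^esub> n) (s \<otimes> t)"
proof -
  have wd: "mloc_cls R M p (t' \<odot>\<^bsub>M\<^esub> m' \<oplus>\<^bsub>M\<^esub> s' \<odot>\<^bsub>M\<^esub> n') (s' \<otimes> t')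
       = mloc_cls R M p (t \<odot>\<^bsub>M\<^esub> m \<oplus>\<^bsub>M\<^esub> s \<odot>\<^bsub>M\<^esub> n) (s \<otimes> t)"
    if h: "(m',s') \<in> mloc_cls R M p m s" "(n',t') \<in> mloc_cls R M p n t" for m' s' n' t'
  proof -
    obtain u where u: "u \<in> carrier R - p" "(u \<otimes> s') \<odot>\<^bsub>M\<^esub> m = (u \<otimes> s) \<odot>\<^bsub>M\<^esub> m'" using mloc_cls_memD(3)[OF h(1)] c by auto
    obtain v where v: "v \<in> carrier R - p" "(v \<otimes> t') \<odot>\<^bsub>M\<^esub> n = (v \<otimes> t) \<odot>\<^bsub>M\<^esub> n'" using mloc_cls_memD(3)[OF h(2)] c by auto
    have cc: "m' \<in> carrier M" "s' \<in> carrier R" "n' \<in> carrier M" "t' \<in> carrier R"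
      using mloc_cls_memD[OF h(1)] mloc_cls_memD[OF h(2)] c by auto
    have cr: "u \<in> carrier R" "v \<in> carrier R" "s \<in> carrier R" "t \<in> carrier R" using u v c by auto
    have "((u \<otimes> v) \<otimes> (s \<otimes> t)) \<odot>\<^bsub>M\<^esub> (t' \<odot>\<^bsub>M\<^esub> m' \<oplus>\<^bsub>M\<^esub> s' \<odot>\<^bsub>M\<^esub> n')
       = (v \<otimes> t \<otimes> t') \<odot>\<^bsub>M\<^esub> ((u \<otimes> s) \<odot>\<^bsub>M\<^esub> m') \<oplus>\<^bsub>M\<^esub> (u \<otimes> s \<otimes> s') \<odot>\<^bsub>M\<^esub> ((v \<otimes> t) \<odot>\<^bsub>M\<^esub> n')"
    proof -
      have "((u \<otimes> v) \<otimes> (s \<otimes> t)) \<odot>\<^bsub>M\<^esub> (t' \<odot>\<^bsub>M\<^esub> m' \<oplus>\<^bsub>M\<^esub> s' \<odot>\<^bsub>M\<^esub> n')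
         = (((u \<otimes> v) \<otimes> (s \<otimes> t)) \<otimes> t') \<odot>\<^bsub>M\<^esub> m' \<oplus>\<^bsub>M\<^esub> (((u \<otimes> v) \<otimes> (s \<otimes> t)) \<otimes> s') \<odot>\<^bsub>M\<^esub> n'"
        using cc cr by (simp add: smult_r_distr smult_assoc1)
      also have "((u \<otimes> v) \<otimes> (s \<otimes> t)) \<otimes> t' = (v \<otimes> t \<otimes> t') \<otimes> (u \<otimes> s)" using cc cr by algebra
      also have "((u \<otimes> v) \<otimes> (s \<otimes> t)) \<otimes> s' = (u \<otimes> s \<otimes> s') \<otimes> (v \<otimes> t)" using cc cr by algebra
      finally show ?thesis using cc cr by (simp add: smult_assoc1)
    qed
    also have "\<dots> = (v \<otimes> t \<otimes> t') \<odot>\<^bsub>M\<^esub> ((u \<otimes> s') \<odot>\<^bsub>M\<^esub> m) \<oplus>\<^bsub>M\<^esub> (u \<otimes> s \<otimes> s') \<odot>\<^bsub>M\<^esub> ((v \<otimes> t') \<odot>\<^bsub>M\<^esub> n)"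
      using u v by simp
    also have "\<dots> = ((u \<otimes> v) \<otimes> (s' \<otimes> t')) \<odot>\<^bsub>M\<^esub> (t \<odot>\<^bsub>M\<^esub> m \<oplus>\<^bsub>M\<^esub> s \<odot>\<^bsub>M\<^esub> n)"
    proof -
      have "((u \<otimes> v) \<otimes> (s' \<otimes> t')) \<odot>\<^bsub>M\<^esub> (t \<odot>\<^bsub>M\<^esub> m \<oplus>\<^bsub>M\<^esub> s \<odot>\<^bsub>M\<^esub> n)
         = (((u \<otimes> v) \<otimes> (s' \<otimes> t')) \<otimes> t) \<odot>\<^bsub>M\<^esub> m \<oplus>\<^bsub>M\<^esub> (((u \<otimes> v) \<otimes> (s' \<otimes> t')) \<otimes> s) \<odot>\<^bsub>M\<^esub> n"
        using cc cr c by (simp add: smult_r_distr smult_assoc1)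
      also have "((u \<otimes> v) \<otimes> (s' \<otimes> t')) \<otimes> t = (v \<otimes> t \<otimes> t') \<otimes> (u \<otimes> s')" using cc cr by algebra
      also have "((u \<otimes> v) \<otimes> (s' \<otimes> t')) \<otimes> s = (u \<otimes> s \<otimes> s') \<otimes> (v \<otimes> t')" using cc cr by algebra
      finally show ?thesis using cc cr c by (simp add: smult_assoc1)
    qed
    finally show ?thesis
      using mloc_cls_eq_iff[OF P, of "t' \<odot>\<^bsub>M\<^esub> m' \<oplus>\<^bsub>M\<^esub> s' \<odot>\<^bsub>M\<^esub> n'" "t \<odot>\<^bsub>M\<^esub> m \<oplus>\<^bsub>M\<^esub> s \<odot>\<^bsub>M\<^esub> n" "s' \<otimes> t'" "s \<otimes> t"]
        prime_compl_mult_closed[OF P] u v c cc mloc_cls_memD(2)[OF h(1)] mloc_cls_memD(2)[OF h(2)] cr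
      by (meson m_closed M.a_closed smult_closed)
  qed
  show ?thesis
    unfolding loc_module_def
    by simp (use wd mloc_cls_self[OF P c(1) c(3)] mloc_cls_self[OF P c(2) c(4)] in blast)
qed

lemma loc_smult_cls:
  assumes P: "primeideal p R" and c: "a \<in> carrier R" "m \<in> carrier M" "s \<in> carrier R - p" "t \<in> carrier R - p"
  shows "loc_cls R p a s \<odot>\<^bsub>loc_module R M p\<^esub> mloc_cls R M p m t = mloc_cls R M p (a \<odot>\<^bsub>M\<^esub> m) (s \<otimes> t)"
proof -
  have wd: "mloc_cls R M p (a' \<odot>\<^bsub>M\<^esub> m') (s' \<otimes> t') = mloc_cls R M p (a \<odot>\<^bsub>M\<^esub> m) (s \<otimes> t)"
    if h: "(a',s') \<in> loc_cls R p a s" "(m',t') \<in> mloc_cls R M p m t" for a' s' m' t'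
  proof -
    obtain u where u: "u \<in> carrier R - p" "u \<otimes> s' \<otimes> a = u \<otimes> s \<otimes> a'" using loc_cls_memD(3)[OF h(1)] c by auto
    obtain v where v: "v \<in> carrier R - p" "(v \<otimes> t') \<odot>\<^bsub>M\<^esub> m = (v \<otimes> t) \<odot>\<^bsub>M\<^esub> m'" using mloc_cls_memD(3)[OF h(2)] c by auto
    have cc: "a' \<in> carrier R" "s' \<in> carrier R" "m' \<in> carrier M" "t' \<in> carrier R"
      using loc_cls_memD[OF h(1)] mloc_cls_memD[OF h(2)] c by auto
    have cr: "u \<in> carrier R" "v \<in> carrier R" "s \<in> carrier R" "t \<in> carrier R" using u v c by auto
    have "((u \<otimes> v) \<otimes> (s \<otimes> t)) \<odot>\<^bsub>M\<^esub> (a' \<odot>\<^bsub>M\<^esub> m') = (u \<otimes> s \<otimes> a') \<odot>\<^bsub>M\<^esub> ((v \<otimes> t) \<odot>\<^bsub>M\<^esub> m')"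
    proof -
      have "(u \<otimes> s \<otimes> a') \<otimes> (v \<otimes> t) = ((u \<otimes> v) \<otimes> (s \<otimes> t)) \<otimes> a'" using cc cr by algebra
      then show ?thesis using cc cr by (simp add: smult_assoc1[symmetric])
    qed
    also have "\<dots> = (u \<otimes> s' \<otimes> a) \<odot>\<^bsub>M\<^esub> ((v \<otimes> t') \<odot>\<^bsub>M\<^esub> m)" using u v by simp
    also have "\<dots> = ((u \<otimes> v) \<otimes> (s' \<otimes> t')) \<odot>\<^bsub>M\<^esub> (a \<odot>\<^bsub>M\<^esub> m)"
    proof -
      have "(u \<otimes> s' \<otimes> a) \<otimes> (v \<otimes> t') = ((u \<otimes> v) \<otimes> (s' \<otimes> t')) \<otimes> a" using cc cr c by algebra
      then show ?thesis using cc cr c by (simp add: smult_assoc1[symmetric])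
    qed
    finally show ?thesis
      using mloc_cls_eq_iff[OF P, of "a' \<odot>\<^bsub>M\<^esub> m'" "a \<odot>\<^bsub>M\<^esub> m" "s' \<otimes> t'" "s \<otimes> t"]
        prime_compl_mult_closed[OF P] u v c cc loc_cls_memD(2)[OF h(1)] mloc_cls_memD(2)[OF h(2)] cr
      by (meson m_closed smult_closed)
  qed
  show ?thesis
    unfolding loc_module_def
    by simp (use wd loc_cls_self[OF P c(1) c(3)] mloc_cls_self[OF P c(2) c(4)] in blast)
qed

lemma mloc_cls_scale:
  assumes P: "primeideal p R" and c: "m \<in> carrier M" "s \<in> carrier R - p"
  shows "mloc_cls R M p (s \<odot>\<^bsub>M\<^esub> m) s = mloc_cls R M p m \<one>"
proof -
  have "(\<one> \<otimes> \<one>) \<odot>\<^bsub>M\<^esub> (s \<odot>\<^bsub>M\<^esub> m) = (\<one> \<otimes> s) \<odot>\<^bsub>M\<^esub> m" using c by simp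
  moreover have "s \<odot>\<^bsub>M\<^esub> m \<in> carrier M" using c by simp
  ultimately show ?thesis
    using mloc_cls_eq_iff[OF P _ c(1) c(2) one_in_prime_compl[OF P]] one_in_prime_compl[OF P] by blast
qed

lemma mod_locmap_cls:
  assumes Q: "primeideal q R" and P: "primeideal p R" and pq: "p \<subseteq> q"
    and c: "m \<in> carrier M" "s \<in> carrier R - q"
  shows "mod_locmap R M p (mloc_cls R M q m s) = mloc_cls R M p m s"
proof -
  have "mloc_cls R M p n t = mloc_cls R M p m s" if h: "(n,t) \<in> mloc_cls R M q m s" for n t
  proof -
    obtain u where u: "u \<in> carrier R - q" "(u \<otimes> t) \<odot>\<^bsub>M\<^esub> m = (u \<otimes> s) \<odot>\<^bsub>M\<^esub> n" "n \<in> carrier M" "t \<in> carrier R - q"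
      using mloc_cls_memD[OF h c(1)] c by auto
    then show ?thesis using mloc_cls_eq_iff[OF P c(1) u(3), of s t] c pq by auto
  qed
  moreover have "(m,s) \<in> mloc_cls R M q m s" using mloc_cls_self[OF Q c] .
  ultimately show ?thesis unfolding mod_locmap_def by blast
qed

end

section \<open>Annihilators and saturation\<close>

context ring_module
begin

lemma submoduleI2:
  assumes "N \<subseteq> carrier M" "\<zero>\<^bsub>M\<^esub> \<in> N" "\<And>x y. x \<in> N \<Longrightarrow> y \<in> N \<Longrightarrow> x \<oplus>\<^bsub>M\<^esub> y \<in> N"
    "\<And>a x. a \<in> carrier R \<Longrightarrow> x \<in> N \<Longrightarrow> a \<odot>\<^bsub>M\<^esub> x \<in> N"
  shows "submodule N R M"
proof (rule submoduleI)
  fix x assume x: "x \<in> N"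
  then have "(\<ominus> \<one>) \<odot>\<^bsub>M\<^esub> x \<in> N" using assms(4) by simp
  moreover have "(\<ominus> \<one>) \<odot>\<^bsub>M\<^esub> x = \<ominus>\<^bsub>M\<^esub> x" using x assms(1) by (auto simp: smult_l_minus)
  ultimately show "\<ominus>\<^bsub>M\<^esub> x \<in> N" by simp
qed (use assms in auto)

lemma submodule_zero_closed: "submodule N R M \<Longrightarrow> \<zero>\<^bsub>M\<^esub> \<in> N"
  using subgroup.one_closed[OF submodule.axioms(1)] by fastforce

lemmas submodule_subset = submoduleE(1)
lemmas submodule_add_closed = submoduleE(5)
lemmas submodule_smult_closed = submodule.smult_closed

definition colon :: "'b set \<Rightarrow> 'b \<Rightarrow> 'a set" where
  "colon N x = {a \<in> carrier R. a \<odot>\<^bsub>M\<^esub> x \<in> N}"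

definition sat :: "'a set \<Rightarrow> 'b set \<Rightarrow> 'b set" where
  "sat p N = {x \<in> carrier M. \<exists>s \<in> carrier R - p. s \<odot>\<^bsub>M\<^esub> x \<in> N}"

lemma ass_quot_iff: "q \<in> ass_quot R M N \<longleftrightarrow> primeideal q R \<and> (\<exists>x\<in>carrier M. q = colon N x)"
  unfolding ass_quot_def colon_def by (simp only: mem_Collect_eq)

lemma colon_subset_carrier: "colon N x \<subseteq> carrier R"
  unfolding colon_def by auto

lemma colon_ideal:
  assumes N: "submodule N R M" and x: "x \<in> carrier M"
  shows "ideal (colon N x) R"
proof (rule idealI2)
  show "colon N x \<subseteq> carrier R" by (rule colon_subset_carrier)
  show "\<zero> \<in> colon N x" unfolding colon_def using x submodule_zero_closed[OF N] by simp
  fix a b assume "a \<in> colon N x" "b \<in> colon N x"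
  then show "a \<oplus> b \<in> colon N x"
    unfolding colon_def using x submodule_add_closed[OF N] by (simp add: smult_l_distr)
next
  fix a c assume "a \<in> colon N x" "c \<in> carrier R"
  then show "c \<otimes> a \<in> colon N x"
    unfolding colon_def using x submodule_smult_closed[OF N] by (simp add: smult_assoc1)
qed

lemma colon_smult_iff:
  "a \<in> carrier R \<Longrightarrow> b \<in> carrier R \<Longrightarrow> x \<in> carrier M \<Longrightarrow>
     a \<in> colon N (b \<odot>\<^bsub>M\<^esub> x) \<longleftrightarrow> a \<otimes> b \<in> colon N x"
  unfolding colon_def by (simp add: smult_assoc1)

lemma colon_subset_colon_smult:
  assumes N: "submodule N R M" and "x \<in> carrier M" "b \<in> carrier R"
  shows "colon N x \<subseteq> colon N (b \<odot>\<^bsub>M\<^esub> x)"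
  using ideal.I_r_closed[OF colon_ideal[OF N assms(2)] _ assms(3)] colon_smult_iff[OF _ assms(3,2)]
    colon_subset_carrier by blast

lemma colon_smult_eq_prime:
  assumes N: "submodule N R M" and x: "x \<in> carrier M" and P: "primeideal (colon N x) R"
    and b: "b \<in> carrier R" "b \<notin> colon N x"
  shows "colon N (b \<odot>\<^bsub>M\<^esub> x) = colon N x"
proof (intro equalityI subsetI)
  fix a assume "a \<in> colon N (b \<odot>\<^bsub>M\<^esub> x)"
  then show "a \<in> colon N x"
    using colon_smult_iff[OF _ b(1) x] colon_subset_carrier primeideal.I_prime[OF P _ b(1)] b(2) by blast
qed (use colon_subset_colon_smult[OF N x b(1)] in blast)

lemma colon_add_mem:
  assumes N: "submodule N R M" and n: "n \<in> N" and w: "w \<in> carrier M"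
  shows "colon N (n \<oplus>\<^bsub>M\<^esub> w) = colon N w"
proof -
  have nc: "n \<in> carrier M" using n submodule_subset[OF N] by auto
  have "a \<odot>\<^bsub>M\<^esub> (n \<oplus>\<^bsub>M\<^esub> w) \<in> N \<longleftrightarrow> a \<odot>\<^bsub>M\<^esub> w \<in> N" if a: "a \<in> carrier R" for a
  proof
    have an: "a \<odot>\<^bsub>M\<^esub> n \<in> N" using submodule_smult_closed[OF N a n] .
    have e: "a \<odot>\<^bsub>M\<^esub> (n \<oplus>\<^bsub>M\<^esub> w) = a \<odot>\<^bsub>M\<^esub> n \<oplus>\<^bsub>M\<^esub> a \<odot>\<^bsub>M\<^esub> w" using a nc w by (simp add: smult_r_distr)
    {
      assume "a \<odot>\<^bsub>M\<^esub> (n \<oplus>\<^bsub>M\<^esub> w) \<in> N"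
      then have "\<ominus>\<^bsub>M\<^esub> (a \<odot>\<^bsub>M\<^esub> n) \<oplus>\<^bsub>M\<^esub> (a \<odot>\<^bsub>M\<^esub> n \<oplus>\<^bsub>M\<^esub> a \<odot>\<^bsub>M\<^esub> w) \<in> N"
        using e submoduleE(3)[OF N an] submodule_add_closed[OF N] by simp
      moreover have "\<ominus>\<^bsub>M\<^esub> (a \<odot>\<^bsub>M\<^esub> n) \<oplus>\<^bsub>M\<^esub> (a \<odot>\<^bsub>M\<^esub> n \<oplus>\<^bsub>M\<^esub> a \<odot>\<^bsub>M\<^esub> w) = a \<odot>\<^bsub>M\<^esub> w"
        using a nc w by (simp add: M.a_assoc[symmetric] M.l_neg)
      ultimately show "a \<odot>\<^bsub>M\<^esub> w \<in> N" by simp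
    }
    assume "a \<odot>\<^bsub>M\<^esub> w \<in> N"
    then show "a \<odot>\<^bsub>M\<^esub> (n \<oplus>\<^bsub>M\<^esub> w) \<in> N" using e submodule_add_closed[OF N an] by simp
  qed
  then show ?thesis unfolding colon_def by auto
qed

lemma not_primeideal_colon_mem:
  assumes N: "submodule N R M" and x: "x \<in> N"
  shows "\<not> primeideal (colon N x) R"
proof
  assume P: "primeideal (colon N x) R"
  have "\<one> \<in> colon N x" using x submodule_subset[OF N] unfolding colon_def by auto
  then show False using one_notin_prime[OF P] by simp
qed

lemma subset_sat: "submodule N R M \<Longrightarrow> primeideal p R \<Longrightarrow> N \<subseteq> sat p N"
  unfolding sat_def using submodule_subset one_in_prime_compl by (force intro!: bexI[of _ \<one>])

lemma sat_submodule:
  assumes N: "submodule N R M" and P: "primeideal p R"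
  shows "submodule (sat p N) R M"
proof (rule submoduleI2)
  show "sat p N \<subseteq> carrier M" unfolding sat_def by auto
  show "\<zero>\<^bsub>M\<^esub> \<in> sat p N" using subset_sat[OF N P] submodule_zero_closed[OF N] by auto
next
  fix x y assume "x \<in> sat p N" "y \<in> sat p N"
  then obtain s t where h: "x \<in> carrier M" "s \<in> carrier R - p" "s \<odot>\<^bsub>M\<^esub> x \<in> N"
    "y \<in> carrier M" "t \<in> carrier R - p" "t \<odot>\<^bsub>M\<^esub> y \<in> N" unfolding sat_def by blast
  have "(s \<otimes> t) \<odot>\<^bsub>M\<^esub> (x \<oplus>\<^bsub>M\<^esub> y) = t \<odot>\<^bsub>M\<^esub> (s \<odot>\<^bsub>M\<^esub> x) \<oplus>\<^bsub>M\<^esub> s \<odot>\<^bsub>M\<^esub> (t \<odot>\<^bsub>M\<^esub> y)"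
    using h by (simp add: smult_r_distr smult_assoc1[symmetric] m_comm)
  also have "\<dots> \<in> N" using h submodule_add_closed[OF N] submodule_smult_closed[OF N] by simp
  finally show "x \<oplus>\<^bsub>M\<^esub> y \<in> sat p N"
    using h prime_compl_mult_closed[OF P h(2,5)] unfolding sat_def by auto
next
  fix a x assume a: "a \<in> carrier R" and "x \<in> sat p N"
  then obtain s where h: "x \<in> carrier M" "s \<in> carrier R - p" "s \<odot>\<^bsub>M\<^esub> x \<in> N" unfolding sat_def by blast
  have "s \<odot>\<^bsub>M\<^esub> (a \<odot>\<^bsub>M\<^esub> x) = a \<odot>\<^bsub>M\<^esub> (s \<odot>\<^bsub>M\<^esub> x)" using h a by (simp add: smult_assoc1[symmetric] m_comm)
  also have "\<dots> \<in> N" using submodule_smult_closed[OF N a h(3)] .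
  finally show "a \<odot>\<^bsub>M\<^esub> x \<in> sat p N" unfolding sat_def using a h by auto
qed

lemma colon_sat_subset:
  assumes N: "submodule N R M" and P: "primeideal p R" and y: "y \<in> carrier M"
    and Q: "primeideal (colon (sat p N) y) R"
  shows "colon (sat p N) y \<subseteq> p"
proof
  fix a assume a: "a \<in> colon (sat p N) y"
  show "a \<in> p"
  proof (rule ccontr)
    assume ap: "a \<notin> p"
    obtain s where s: "a \<in> carrier R" "s \<in> carrier R - p" "s \<odot>\<^bsub>M\<^esub> (a \<odot>\<^bsub>M\<^esub> y) \<in> N"
      using a unfolding colon_def sat_def by auto
    have "(s \<otimes> a) \<odot>\<^bsub>M\<^esub> y \<in> N" using s y by (simp add: smult_assoc1)
    moreover have "s \<otimes> a \<in> carrier R - p" using prime_compl_mult_closed[OF P s(2)] ap s(1) by auto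
    ultimately have "y \<in> sat p N" unfolding sat_def using y by blast
    then have "\<one> \<in> colon (sat p N) y" unfolding colon_def using y by simp
    then show False using one_notin_prime[OF Q] by simp
  qed
qed

lemma colon_sat_eq:
  assumes N: "submodule N R M" and P: "primeideal p R" and x: "x \<in> carrier M" and px: "p = colon N x"
  shows "colon (sat p N) x = p"
proof (intro equalityI subsetI)
  fix a assume "a \<in> colon (sat p N) x"
  then obtain s where s: "a \<in> carrier R" "s \<in> carrier R - p" "s \<odot>\<^bsub>M\<^esub> (a \<odot>\<^bsub>M\<^esub> x) \<in> N"
    unfolding colon_def sat_def by auto
  then have "s \<otimes> a \<in> p" unfolding px colon_def using x by (simp add: smult_assoc1)
  then show "a \<in> p" using primeideal.I_prime[OF P, of s a] s by auto
next
  fix a assume "a \<in> p"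
  then show "a \<in> colon (sat p N) x" using subset_sat[OF N P] unfolding px colon_def by auto
qed

end

section \<open>Localised submodules and contractions\<close>

context ring_module
begin

lemma mloc_cls_in_loc_sub_iff:
  assumes P: "primeideal p R" and N: "submodule N R M"
    and c: "m \<in> carrier M" "s \<in> carrier R - p"
  shows "mloc_cls R M p m s \<in> loc_sub R M p N \<longleftrightarrow> m \<in> sat p N"
proof
  assume "mloc_cls R M p m s \<in> loc_sub R M p N"
  then obtain n t where nt: "n \<in> N" "t \<in> carrier R - p" "mloc_cls R M p m s = mloc_cls R M p n t"
    unfolding loc_sub_def by blast
  have nc: "n \<in> carrier M" using nt(1) submodule_subset[OF N] by auto
  obtain u where u: "u \<in> carrier R - p" "(u \<otimes> t) \<odot>\<^bsub>M\<^esub> m = (u \<otimes> s) \<odot>\<^bsub>M\<^esub> n"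
    using mloc_cls_eq_iff[OF P c(1) nc c(2) nt(2)] nt(3) by auto
  have "(u \<otimes> t) \<odot>\<^bsub>M\<^esub> m \<in> N" using submodule_smult_closed[OF N _ nt(1)] u c(2) by auto
  then show "m \<in> sat p N"
    unfolding sat_def using c(1) prime_compl_mult_closed[OF P u(1) nt(2)] by blast
next
  assume "m \<in> sat p N"
  then obtain t where t: "t \<in> carrier R - p" "t \<odot>\<^bsub>M\<^esub> m \<in> N" unfolding sat_def by blast
  have "mloc_cls R M p m s = mloc_cls R M p (t \<odot>\<^bsub>M\<^esub> m) (t \<otimes> s)"
    using mloc_cls_eq_iff[OF P c(1) _ c(2) prime_compl_mult_closed[OF P t(1) c(2)], of "t \<odot>\<^bsub>M\<^esub> m"]
      one_in_prime_compl[OF P] t(1) c by (auto simp: smult_assoc1 m_comm intro!: bexI[of _ \<one>])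
  then show "mloc_cls R M p m s \<in> loc_sub R M p N"
    unfolding loc_sub_def using t prime_compl_mult_closed[OF P t(1) c(2)] by blast
qed

lemma loc_sub_sat:
  assumes P: "primeideal p R" and N: "submodule N R M"
  shows "loc_sub R M p (sat p N) = loc_sub R M p N"
proof
  show "loc_sub R M p N \<subseteq> loc_sub R M p (sat p N)"
    unfolding loc_sub_def using subset_sat[OF N P] by blast
  show "loc_sub R M p (sat p N) \<subseteq> loc_sub R M p N"
    unfolding loc_sub_def
    using mloc_cls_in_loc_sub_iff[OF P N] unfolding loc_sub_def sat_def by blast
qed

lemma loc_sub_atE:
  assumes Q: "primeideal q R" and P: "primeideal p R" and pq: "p \<subseteq> q"
    and z: "z \<in> loc_sub_at R M p q N"
  obtains a s \<xi> where "a \<in> carrier R - p" "s \<in> carrier R - q" "\<xi> \<in> N"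
    "z = loc_cls R p s a \<odot>\<^bsub>loc_module R M p\<^esub> mod_locmap R M p \<xi>"
proof -
  obtain t \<xi> where t: "t \<in> carrier (loc_ring R q)" "t \<notin> ext_ideal R q p" and \<xi>: "\<xi> \<in> N"
    and z: "z = inv\<^bsub>loc_ring R p\<^esub> (ring_locmap R p t) \<odot>\<^bsub>loc_module R M p\<^esub> mod_locmap R M p \<xi>"
    using assms(4) unfolding loc_sub_at_def by blast
  obtain a s where as: "a \<in> carrier R" "s \<in> carrier R" "s \<notin> q" "t = loc_cls R q a s"
    using t(1) by (rule loc_ring_carrierE)
  have "a \<notin> p"
    using t(2) as loc_cls_in_loc_ideal_iff[OF Q P pq as(1)]
      ext_ideal_eq_loc_ideal[OF Q primeideal.axioms(1)[OF P]] by auto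
  moreover have "ring_locmap R p t = loc_cls R p a s" using ring_locmap_cls[OF Q P pq] as by auto
  ultimately have "inv\<^bsub>loc_ring R p\<^esub> (ring_locmap R p t) = loc_cls R p s a"
    using loc_inv_cls[OF P] as pq by auto
  then show thesis using that[OF _ _ \<xi>] as z \<open>a \<notin> p\<close> by auto
qed

lemma loc_sub_atI:
  assumes Q: "primeideal q R" and P: "primeideal p R" and pq: "p \<subseteq> q"
    and c: "m \<in> carrier M" "s \<in> carrier R - p" and N: "mloc_cls R M q m \<one> \<in> N"
  shows "mloc_cls R M p m s \<in> loc_sub_at R M p q N"
proof -
  have one: "\<one> \<in> carrier R - p" "\<one> \<in> carrier R - q"
    using one_in_prime_compl[OF P] one_in_prime_compl[OF Q] by auto
  have "loc_cls R q s \<one> \<in> carrier (loc_ring R q) - ext_ideal R q p"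
    using c(2) loc_cls_in_carrier[OF _ one(2)] loc_cls_in_loc_ideal_iff[OF Q P pq _ one(2)]
      ext_ideal_eq_loc_ideal[OF Q primeideal.axioms(1)[OF P]] by auto
  moreover have "inv\<^bsub>loc_ring R p\<^esub> (ring_locmap R p (loc_cls R q s \<one>))
      \<odot>\<^bsub>loc_module R M p\<^esub> mod_locmap R M p (mloc_cls R M q m \<one>) = mloc_cls R M p m s"
    using c one ring_locmap_cls[OF Q P pq] mod_locmap_cls[OF Q P pq] loc_inv_cls[OF P]
      loc_smult_cls[OF P] by auto
  ultimately show ?thesis unfolding loc_sub_at_def using N by blast
qed

lemma loc_sub_at_loc_sub:
  assumes Q: "primeideal q R" and P: "primeideal p R" and pq: "p \<subseteq> q" and F: "submodule F R M"
  shows "loc_sub_at R M p q (loc_sub R M q F) = loc_sub R M p F"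
proof
  show "loc_sub_at R M p q (loc_sub R M q F) \<subseteq> loc_sub R M p F"
  proof
    fix z assume "z \<in> loc_sub_at R M p q (loc_sub R M q F)"
    then obtain a s \<xi> where as: "a \<in> carrier R - p" "s \<in> carrier R - q" "\<xi> \<in> loc_sub R M q F"
      and z: "z = loc_cls R p s a \<odot>\<^bsub>loc_module R M p\<^esub> mod_locmap R M p \<xi>"
      by (rule loc_sub_atE[OF Q P pq])
    obtain m s' where ms: "m \<in> F" "s' \<in> carrier R - q" "\<xi> = mloc_cls R M q m s'"
      using as(3) unfolding loc_sub_def by blast
    have m: "m \<in> carrier M" using ms(1) submodule_subset[OF F] by auto
    have "z = loc_cls R p s a \<odot>\<^bsub>loc_module R M p\<^esub> mloc_cls R M p m s'"
      using z ms(2,3) m mod_locmap_cls[OF Q P pq] by auto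
    also have "\<dots> = mloc_cls R M p (s \<odot>\<^bsub>M\<^esub> m) (a \<otimes> s')"
      using loc_smult_cls[OF P _ m as(1)] as(2) ms(2) pq by auto
    finally have "z = mloc_cls R M p (s \<odot>\<^bsub>M\<^esub> m) (a \<otimes> s')" .
    moreover have "s \<odot>\<^bsub>M\<^esub> m \<in> F" using submodule_smult_closed[OF F _ ms(1)] as(2) by auto
    moreover have "a \<otimes> s' \<in> carrier R - p" using prime_compl_mult_closed[OF P as(1)] ms(2) pq by auto
    ultimately show "z \<in> loc_sub R M p F" unfolding loc_sub_def by blast
  qed
  show "loc_sub R M p F \<subseteq> loc_sub_at R M p q (loc_sub R M q F)"
  proof
    fix z assume "z \<in> loc_sub R M p F"
    then obtain m s where ms: "m \<in> F" "s \<in> carrier R - p" "z = mloc_cls R M p m s"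
      unfolding loc_sub_def by blast
    have "mloc_cls R M q m \<one> \<in> loc_sub R M q F"
      unfolding loc_sub_def using ms(1) one_in_prime_compl[OF Q] by blast
    then show "z \<in> loc_sub_at R M p q (loc_sub R M q F)"
      using loc_sub_atI[OF Q P pq _ ms(2)] ms submodule_subset[OF F] by auto
  qed
qed

definition contr :: "'a set \<Rightarrow> ('b \<times> 'a) set set \<Rightarrow> 'b set" where
  "contr p N = {x \<in> carrier M. mloc_cls R M p x \<one> \<in> N}"

lemma mloc_cls_in_submodule_iff:
  assumes P: "primeideal p R" and N: "submodule N (loc_ring R p) (loc_module R M p)"
    and c: "m \<in> carrier M" "s \<in> carrier R - p"
  shows "mloc_cls R M p m s \<in> N \<longleftrightarrow> mloc_cls R M p m \<one> \<in> N"
proof -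
  have one: "\<one> \<in> carrier R - p" by (rule one_in_prime_compl[OF P])
  have "loc_cls R p \<one> s \<odot>\<^bsub>loc_module R M p\<^esub> mloc_cls R M p m \<one> = mloc_cls R M p m s"
    using c one by (simp add: loc_smult_cls[OF P])
  moreover have "loc_cls R p s \<one> \<odot>\<^bsub>loc_module R M p\<^esub> mloc_cls R M p m s = mloc_cls R M p m \<one>"
    using c one by (simp add: loc_smult_cls[OF P] mloc_cls_scale[OF P])
  moreover have "loc_cls R p \<one> s \<in> carrier (loc_ring R p)" "loc_cls R p s \<one> \<in> carrier (loc_ring R p)"
    using c one by (auto intro: loc_cls_in_carrier)
  ultimately show ?thesis using submodule.smult_closed[OF N] by metis
qed

lemma contr_submodule:
  assumes P: "primeideal p R" and N: "submodule N (loc_ring R p) (loc_module R M p)"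
  shows "submodule (contr p N) R M"
proof (rule submoduleI2)
  have one: "\<one> \<in> carrier R - p" by (rule one_in_prime_compl[OF P])
  show "contr p N \<subseteq> carrier M" unfolding contr_def by auto
  show "\<zero>\<^bsub>M\<^esub> \<in> contr p N"
    using subgroup.one_closed[OF submodule.axioms(1)[OF N]] unfolding contr_def loc_module_zero by auto
  show "x \<oplus>\<^bsub>M\<^esub> y \<in> contr p N" if "x \<in> contr p N" "y \<in> contr p N" for x y
  proof -
    have "mloc_cls R M p x \<one> \<oplus>\<^bsub>loc_module R M p\<^esub> mloc_cls R M p y \<one> = mloc_cls R M p (x \<oplus>\<^bsub>M\<^esub> y) \<one>"
      using that one unfolding contr_def by (simp add: loc_module_add_cls[OF P])
    then show ?thesis
      using that subgroup.m_closed[OF submodule.axioms(1)[OF N]] unfolding contr_def by force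
  qed
  show "a \<odot>\<^bsub>M\<^esub> x \<in> contr p N" if "a \<in> carrier R" "x \<in> contr p N" for a x
  proof -
    have "loc_cls R p a \<one> \<odot>\<^bsub>loc_module R M p\<^esub> mloc_cls R M p x \<one> = mloc_cls R M p (a \<odot>\<^bsub>M\<^esub> x) \<one>"
      using that one unfolding contr_def by (simp add: loc_smult_cls[OF P])
    then show ?thesis
      using that submodule.smult_closed[OF N] loc_cls_in_carrier[OF that(1) one]
      unfolding contr_def by force
  qed
qed

lemma sat_contr:
  assumes P: "primeideal p R" and N: "submodule N (loc_ring R p) (loc_module R M p)"
  shows "sat p (contr p N) = contr p N"
proof
  show "sat p (contr p N) \<subseteq> contr p N"
  proof
    fix x assume "x \<in> sat p (contr p N)"
    then obtain s where s: "x \<in> carrier M" "s \<in> carrier R - p" "mloc_cls R M p (s \<odot>\<^bsub>M\<^esub> x) \<one> \<in> N"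
      unfolding sat_def contr_def by blast
    then have "mloc_cls R M p (s \<odot>\<^bsub>M\<^esub> x) s \<in> N"
      using mloc_cls_in_submodule_iff[OF P N, of "s \<odot>\<^bsub>M\<^esub> x" s] by auto
    then show "x \<in> contr p N" unfolding contr_def using s(1) mloc_cls_scale[OF P s(1,2)] by auto
  qed
  show "contr p N \<subseteq> sat p (contr p N)"
    by (rule subset_sat[OF contr_submodule[OF P N] P])
qed

lemma loc_sub_contr:
  assumes P: "primeideal p R" and N: "submodule N (loc_ring R p) (loc_module R M p)"
  shows "loc_sub R M p (contr p N) = N"
proof
  show "loc_sub R M p (contr p N) \<subseteq> N"
    unfolding loc_sub_def contr_def using mloc_cls_in_submodule_iff[OF P N] by auto
  show "N \<subseteq> loc_sub R M p (contr p N)"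
  proof
    fix \<xi> assume \<xi>: "\<xi> \<in> N"
    then have "\<xi> \<in> carrier (loc_module R M p)" using subgroup.subset[OF submodule.axioms(1)[OF N]] by auto
    then obtain m s where "m \<in> carrier M" "s \<in> carrier R - p" "\<xi> = mloc_cls R M p m s"
      unfolding loc_module_carrier_iff by blast
    then show "\<xi> \<in> loc_sub R M p (contr p N)"
      using \<xi> mloc_cls_in_submodule_iff[OF P N] unfolding loc_sub_def contr_def by auto
  qed
qed

lemma contr_loc_sub:
  assumes P: "primeideal p R" and F: "submodule F R M"
  shows "contr p (loc_sub R M p F) = sat p F"
  using mloc_cls_in_loc_sub_iff[OF P F _ one_in_prime_compl[OF P]] unfolding contr_def sat_def by auto

lemma contr_loc_sub_at:
  assumes Q: "primeideal q R" and P: "primeideal p R" and pq: "p \<subseteq> q"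
    and N: "submodule N (loc_ring R q) (loc_module R M q)"
  shows "contr p (loc_sub_at R M p q N) = sat p (contr q N)"
proof
  show "contr p (loc_sub_at R M p q N) \<subseteq> sat p (contr q N)"
  proof
    fix x assume "x \<in> contr p (loc_sub_at R M p q N)"
    then have x: "x \<in> carrier M" "mloc_cls R M p x \<one> \<in> loc_sub_at R M p q N"
      unfolding contr_def by auto
    then obtain a s \<xi> where as: "a \<in> carrier R - p" "s \<in> carrier R - q" "\<xi> \<in> N"
      and e: "mloc_cls R M p x \<one> = loc_cls R p s a \<odot>\<^bsub>loc_module R M p\<^esub> mod_locmap R M p \<xi>"
      by (elim loc_sub_atE[OF Q P pq])
    have "\<xi> \<in> carrier (loc_module R M q)" using as(3) subgroup.subset[OF submodule.axioms(1)[OF N]] by auto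
    then obtain m s' where ms: "m \<in> carrier M" "s' \<in> carrier R - q" "\<xi> = mloc_cls R M q m s'"
      unfolding loc_module_carrier_iff by blast
    have mN: "m \<in> contr q N" using mloc_cls_in_submodule_iff[OF Q N ms(1,2)] as(3) ms unfolding contr_def by auto
    have "mloc_cls R M p x \<one> = loc_cls R p s a \<odot>\<^bsub>loc_module R M p\<^esub> mloc_cls R M p m s'"
      using e ms mod_locmap_cls[OF Q P pq] by simp
    also have "\<dots> = mloc_cls R M p (s \<odot>\<^bsub>M\<^esub> m) (a \<otimes> s')"
      using loc_smult_cls[OF P _ ms(1) as(1)] as(2) ms(2) pq by auto
    finally have "mloc_cls R M p x \<one> = mloc_cls R M p (s \<odot>\<^bsub>M\<^esub> m) (a \<otimes> s')" .
    moreover have as': "a \<otimes> s' \<in> carrier R - p" using prime_compl_mult_closed[OF P as(1)] ms(2) pq by auto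
    ultimately obtain v where v: "v \<in> carrier R - p" "(v \<otimes> (a \<otimes> s')) \<odot>\<^bsub>M\<^esub> x = (v \<otimes> \<one>) \<odot>\<^bsub>M\<^esub> (s \<odot>\<^bsub>M\<^esub> m)"
      using mloc_cls_eq_iff[OF P x(1) _ one_in_prime_compl[OF P] as', of "s \<odot>\<^bsub>M\<^esub> m"] as(2) ms(1)
      by (metis DiffD1 smult_closed)
    have "(v \<otimes> \<one>) \<odot>\<^bsub>M\<^esub> (s \<odot>\<^bsub>M\<^esub> m) \<in> contr q N"
      using submodule_smult_closed[OF contr_submodule[OF Q N]] mN v(1) as(2) by auto
    then have "(v \<otimes> (a \<otimes> s')) \<odot>\<^bsub>M\<^esub> x \<in> contr q N" using v(2) by simp
    then show "x \<in> sat p (contr q N)"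
      unfolding sat_def using x(1) prime_compl_mult_closed[OF P v(1) as'] by blast
  qed
  show "sat p (contr q N) \<subseteq> contr p (loc_sub_at R M p q N)"
  proof
    fix x assume "x \<in> sat p (contr q N)"
    then obtain u where u: "x \<in> carrier M" "u \<in> carrier R - p" "u \<odot>\<^bsub>M\<^esub> x \<in> contr q N"
      unfolding sat_def by blast
    then have "mloc_cls R M p (u \<odot>\<^bsub>M\<^esub> x) u \<in> loc_sub_at R M p q N"
      using loc_sub_atI[OF Q P pq] unfolding contr_def by auto
    then show "x \<in> contr p (loc_sub_at R M p q N)"
      unfolding contr_def using mloc_cls_scale[OF P u(1,2)] u(1) by auto
  qed
qed

lemma loc_smult_cls_in_submodule_iff:
  assumes P: "primeideal p R" and N: "submodule N (loc_ring R p) (loc_module R M p)"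
    and c: "a \<in> carrier R" "s \<in> carrier R - p" "y \<in> carrier M" "t \<in> carrier R - p"
  shows "loc_cls R p a s \<odot>\<^bsub>loc_module R M p\<^esub> mloc_cls R M p y t \<in> N \<longleftrightarrow> a \<odot>\<^bsub>M\<^esub> y \<in> contr p N"
proof -
  have "a \<odot>\<^bsub>M\<^esub> y \<in> carrier M" using c by simp
  then show ?thesis
    unfolding loc_smult_cls[OF P c(1,3,2,4)] contr_def
    using mloc_cls_in_submodule_iff[OF P N _ prime_compl_mult_closed[OF P c(2,4)]] by blast
qed

lemma loc_ideal_eq_ann_iff:
  assumes P: "primeideal p R" and N: "submodule N (loc_ring R p) (loc_module R M p)"
    and y: "y \<in> carrier M" "t \<in> carrier R - p"
  shows "loc_ideal R p p = {\<alpha> \<in> carrier (loc_ring R p). \<alpha> \<odot>\<^bsub>loc_module R M p\<^esub> mloc_cls R M p y t \<in> N}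
      \<longleftrightarrow> p = colon (contr p N) y"
proof -
  have one: "\<one> \<in> carrier R - p" by (rule one_in_prime_compl[OF P])
  have mem: "loc_cls R p a s \<in> loc_ideal R p p \<longleftrightarrow> a \<in> p" if "a \<in> carrier R" "s \<in> carrier R - p" for a s
    using loc_cls_in_loc_ideal_iff[OF P P order_refl that] .
  show ?thesis
  proof
    assume L: "loc_ideal R p p = {\<alpha> \<in> carrier (loc_ring R p). \<alpha> \<odot>\<^bsub>loc_module R M p\<^esub> mloc_cls R M p y t \<in> N}"
    show "p = colon (contr p N) y"
    proof (intro equalityI subsetI)
      fix a assume "a \<in> p"
      then have "loc_cls R p a \<one> \<in> loc_ideal R p p" using mem prime_subset_carrier[OF P] one by auto
      then show "a \<in> colon (contr p N) y"
        using L loc_smult_cls_in_submodule_iff[OF P N _ one y] prime_subset_carrier[OF P] \<open>a \<in> p\<close>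
        unfolding colon_def by auto
    next
      fix a assume "a \<in> colon (contr p N) y"
      then have "loc_cls R p a \<one> \<in> loc_ideal R p p"
        using L loc_smult_cls_in_submodule_iff[OF P N _ one y] loc_cls_in_carrier[OF _ one]
        unfolding colon_def by auto
      then show "a \<in> p" using mem one \<open>a \<in> colon (contr p N) y\<close> colon_subset_carrier by blast
    qed
  next
    assume C: "p = colon (contr p N) y"
    have K: "loc_cls R p a s \<in> loc_ideal R p p \<longleftrightarrow>
        loc_cls R p a s \<odot>\<^bsub>loc_module R M p\<^esub> mloc_cls R M p y t \<in> N"
      if "a \<in> carrier R" "s \<in> carrier R - p" for a s
      using mem[OF that] loc_smult_cls_in_submodule_iff[OF P N that y] C that(1)
      unfolding colon_def by blast
    show "loc_ideal R p p = {\<alpha> \<in> carrier (loc_ring R p). \<alpha> \<odot>\<^bsub>loc_module R M p\<^esub> mloc_cls R M p y t \<in> N}"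
    proof (intro equalityI subsetI)
      fix \<alpha> assume "\<alpha> \<in> loc_ideal R p p"
      then obtain a s where "a \<in> p" "s \<in> carrier R - p" "\<alpha> = loc_cls R p a s"
        unfolding loc_ideal_def by blast
      then show "\<alpha> \<in> {\<alpha> \<in> carrier (loc_ring R p). \<alpha> \<odot>\<^bsub>loc_module R M p\<^esub> mloc_cls R M p y t \<in> N}"
        using K loc_cls_in_carrier prime_subset_carrier[OF P] \<open>\<alpha> \<in> loc_ideal R p p\<close> by auto
    next
      fix \<alpha> assume \<alpha>: "\<alpha> \<in> {\<alpha> \<in> carrier (loc_ring R p). \<alpha> \<odot>\<^bsub>loc_module R M p\<^esub> mloc_cls R M p y t \<in> N}"
      then obtain a s where "a \<in> carrier R" "s \<in> carrier R - p" "\<alpha> = loc_cls R p a s"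
        unfolding loc_ring_carrier_iff by blast
      then show "\<alpha> \<in> loc_ideal R p p" using K \<alpha> by auto
    qed
  qed
qed

lemma ass_contr_iff:
  assumes P: "primeideal p R" and N: "submodule N (loc_ring R p) (loc_module R M p)"
  shows "ext_ideal R p p \<in> ass_quot (loc_ring R p) (loc_module R M p) N \<longleftrightarrow> p \<in> ass_quot R M (contr p N)"
proof -
  have one: "\<one> \<in> carrier R - p" by (rule one_in_prime_compl[OF P])
  have E: "ext_ideal R p p = loc_ideal R p p"
    by (rule ext_ideal_eq_loc_ideal[OF P primeideal.axioms(1)[OF P]])
  note ann = loc_ideal_eq_ann_iff[OF P N]
  show ?thesis
  proof
    assume "ext_ideal R p p \<in> ass_quot (loc_ring R p) (loc_module R M p) N"
    then obtain \<xi> where "\<xi> \<in> carrier (loc_module R M p)"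
      "loc_ideal R p p = {\<alpha> \<in> carrier (loc_ring R p). \<alpha> \<odot>\<^bsub>loc_module R M p\<^esub> \<xi> \<in> N}"
      unfolding ass_quot_def E by blast
    then show "p \<in> ass_quot R M (contr p N)"
      using ann P unfolding loc_module_carrier_iff ass_quot_iff by blast
  next
    assume "p \<in> ass_quot R M (contr p N)"
    then obtain y where "y \<in> carrier M" "p = colon (contr p N) y" unfolding ass_quot_iff by blast
    then show "ext_ideal R p p \<in> ass_quot (loc_ring R p) (loc_module R M p) N"
      using ann[OF _ one] mloc_cls_in_carrier[OF _ one] primeideal_loc_ideal[OF P]
      unfolding ass_quot_def E by blast
  qed
qed

end

section \<open>Associated primes over a noetherian ring\<close>

context ring_module
begin

lemma primeideal_colon_if_maximal:
  assumes N: "submodule N R M" and y: "y \<in> carrier M" "y \<notin> N"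
    and max: "\<And>a. a \<in> carrier R \<Longrightarrow> a \<odot>\<^bsub>M\<^esub> y \<notin> N \<Longrightarrow> colon N (a \<odot>\<^bsub>M\<^esub> y) = colon N y"
  shows "primeideal (colon N y) R"
proof (rule primeidealI[OF colon_ideal[OF N y(1)] is_cring])
  have "\<one> \<notin> colon N y" using y unfolding colon_def by simp
  then show "carrier R \<noteq> colon N y" by auto
next
  fix a b assume ab: "a \<in> carrier R" "b \<in> carrier R" "a \<otimes> b \<in> colon N y"
  show "a \<in> colon N y \<or> b \<in> colon N y"
  proof (cases "a \<in> colon N y")
    case False
    then have "colon N (a \<odot>\<^bsub>M\<^esub> y) = colon N y" using max ab(1) unfolding colon_def by auto
    moreover have "b \<in> colon N (a \<odot>\<^bsub>M\<^esub> y)"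
      using colon_smult_iff[OF ab(2,1) y(1)] ab m_comm by auto
    ultimately show ?thesis by simp
  qed simp
qed

lemma colon_superset_cases:
  assumes N: "submodule N R M" and N': "submodule N' R M" and NN: "N \<subseteq> N'"
    and x: "x \<in> carrier M" and P: "primeideal (colon N x) R"
  shows "colon N' x = colon N x \<or> (\<exists>b\<in>carrier R. b \<odot>\<^bsub>M\<^esub> x \<in> N' \<and> b \<odot>\<^bsub>M\<^esub> x \<notin> N \<and> colon N (b \<odot>\<^bsub>M\<^esub> x) = colon N x)"
proof (cases "\<exists>b\<in>carrier R. b \<odot>\<^bsub>M\<^esub> x \<in> N' \<and> b \<odot>\<^bsub>M\<^esub> x \<notin> N")
  case True
  then obtain b where b: "b \<in> carrier R" "b \<odot>\<^bsub>M\<^esub> x \<in> N'" "b \<odot>\<^bsub>M\<^esub> x \<notin> N" by blast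
  then have "b \<notin> colon N x" unfolding colon_def by auto
  then have "colon N (b \<odot>\<^bsub>M\<^esub> x) = colon N x" using colon_smult_eq_prime[OF N x P b(1)] by simp
  then show ?thesis using b by blast
next
  case False
  have "colon N' x = colon N x" unfolding colon_def using False NN by blast
  then show ?thesis by simp
qed

definition span_insert :: "'b set \<Rightarrow> 'b \<Rightarrow> 'b set" where
  "span_insert N z = {n \<oplus>\<^bsub>M\<^esub> b \<odot>\<^bsub>M\<^esub> z | n b. n \<in> N \<and> b \<in> carrier R}"

lemma span_insert_submodule:
  assumes N: "submodule N R M" and z: "z \<in> carrier M"
  shows "submodule (span_insert N z) R M"
proof (rule submoduleI2)
  show "span_insert N z \<subseteq> carrier M" unfolding span_insert_def using submodule_subset[OF N] z by auto
  have "\<zero>\<^bsub>M\<^esub> \<oplus>\<^bsub>M\<^esub> \<zero> \<odot>\<^bsub>M\<^esub> z = \<zero>\<^bsub>M\<^esub>" using z by simp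
  then show "\<zero>\<^bsub>M\<^esub> \<in> span_insert N z" unfolding span_insert_def using submodule_zero_closed[OF N] by force
next
  fix x y assume "x \<in> span_insert N z" "y \<in> span_insert N z"
  then obtain n b n' b' where h: "n \<in> N" "b \<in> carrier R" "x = n \<oplus>\<^bsub>M\<^esub> b \<odot>\<^bsub>M\<^esub> z"
    "n' \<in> N" "b' \<in> carrier R" "y = n' \<oplus>\<^bsub>M\<^esub> b' \<odot>\<^bsub>M\<^esub> z" unfolding span_insert_def by blast
  have c: "n \<in> carrier M" "n' \<in> carrier M" using h submodule_subset[OF N] by auto
  have "x \<oplus>\<^bsub>M\<^esub> y = (n \<oplus>\<^bsub>M\<^esub> n') \<oplus>\<^bsub>M\<^esub> (b \<oplus> b') \<odot>\<^bsub>M\<^esub> z"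
    using h c z by (simp add: smult_l_distr M.a_ac)
  moreover have "n \<oplus>\<^bsub>M\<^esub> n' \<in> N" using submodule_add_closed[OF N h(1) h(4)] .
  moreover have "b \<oplus> b' \<in> carrier R" using h by simp
  ultimately show "x \<oplus>\<^bsub>M\<^esub> y \<in> span_insert N z" unfolding span_insert_def by blast
next
  fix a x assume a: "a \<in> carrier R" and "x \<in> span_insert N z"
  then obtain n b where h: "n \<in> N" "b \<in> carrier R" "x = n \<oplus>\<^bsub>M\<^esub> b \<odot>\<^bsub>M\<^esub> z" unfolding span_insert_def by blast
  have c: "n \<in> carrier M" using h submodule_subset[OF N] by auto
  have "a \<odot>\<^bsub>M\<^esub> x = a \<odot>\<^bsub>M\<^esub> n \<oplus>\<^bsub>M\<^esub> (a \<otimes> b) \<odot>\<^bsub>M\<^esub> z"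
    using h c z a by (simp add: smult_r_distr smult_assoc1)
  moreover have "a \<odot>\<^bsub>M\<^esub> n \<in> N" using submodule_smult_closed[OF N a h(1)] .
  moreover have "a \<otimes> b \<in> carrier R" using h a by simp
  ultimately show "a \<odot>\<^bsub>M\<^esub> x \<in> span_insert N z" unfolding span_insert_def by blast
qed

lemma span_insert_superset:
  assumes N: "submodule N R M" and z: "z \<in> carrier M"
  shows "N \<subseteq> span_insert N z" "z \<in> span_insert N z"
proof -
  show "N \<subseteq> span_insert N z"
  proof
    fix n assume n: "n \<in> N"
    then have "n = n \<oplus>\<^bsub>M\<^esub> \<zero> \<odot>\<^bsub>M\<^esub> z" using z submodule_subset[OF N] by auto
    then show "n \<in> span_insert N z" unfolding span_insert_def using n by blast
  qed
  have "z = \<zero>\<^bsub>M\<^esub> \<oplus>\<^bsub>M\<^esub> \<one> \<odot>\<^bsub>M\<^esub> z" using z by simp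
  then show "z \<in> span_insert N z" unfolding span_insert_def using submodule_zero_closed[OF N] by blast
qed

lemma ass_quot_carrier: "ass_quot R M (carrier M) = {}"
  using not_primeideal_colon_mem[OF carrier_is_submodule] by (auto simp: ass_quot_iff)

definition ass_multiples :: "'b set \<Rightarrow> 'b \<Rightarrow> 'a set set" where
  "ass_multiples N y = {q. primeideal q R \<and> (\<exists>a\<in>carrier R. q = colon N (a \<odot>\<^bsub>M\<^esub> y))}"

lemma colon_span_insert_cases:
  assumes N: "submodule N R M" and z: "z \<in> carrier M" and x: "x \<in> carrier M"
    and P: "primeideal (colon N x) R"
  shows "colon (span_insert N z) x = colon N x \<or> colon N x \<in> ass_multiples N z"
proof -
  note N' = span_insert_submodule[OF N z] and NN = span_insert_superset(1)[OF N z]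
  have "colon N x \<in> ass_multiples N z"
    if b: "b \<in> carrier R" "b \<odot>\<^bsub>M\<^esub> x \<in> span_insert N z" "colon N (b \<odot>\<^bsub>M\<^esub> x) = colon N x" for b
  proof -
    obtain n d where nd: "n \<in> N" "d \<in> carrier R" "b \<odot>\<^bsub>M\<^esub> x = n \<oplus>\<^bsub>M\<^esub> d \<odot>\<^bsub>M\<^esub> z"
      using b(2) unfolding span_insert_def by blast
    then have "colon N x = colon N (d \<odot>\<^bsub>M\<^esub> z)" using b(3) colon_add_mem[OF N nd(1)] z by simp
    then show ?thesis using P nd(2) unfolding ass_multiples_def by blast
  qed
  then show ?thesis using colon_superset_cases[OF N N' NN x P] by blast
qed

lemma ass_multiples_eq_prime_colon:
  assumes N: "submodule N R M" and z: "z \<in> carrier M" and P: "primeideal (colon N z) R"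
  shows "ass_multiples N z = {colon N z}"
proof (intro equalityI subsetI)
  fix q assume "q \<in> ass_multiples N z"
  then obtain d where q: "primeideal q R" "d \<in> carrier R" "q = colon N (d \<odot>\<^bsub>M\<^esub> z)"
    unfolding ass_multiples_def by blast
  have "d \<notin> colon N z" using not_primeideal_colon_mem[OF N, of "d \<odot>\<^bsub>M\<^esub> z"] q unfolding colon_def by auto
  then show "q \<in> {colon N z}" using colon_smult_eq_prime[OF N z P q(2)] q(3) by simp
next
  fix q assume "q \<in> {colon N z}"
  then show "q \<in> ass_multiples N z" using P z unfolding ass_multiples_def by (auto intro!: bexI[of _ \<one>])
qed

lemma finite_subset_colon_sat:
  assumes N: "submodule N R M" and P: "primeideal p R" and y: "y \<in> carrier M"
  shows "finite A \<Longrightarrow> A \<subseteq> colon (sat p N) y \<Longrightarrow> \<exists>s\<in>carrier R - p. A \<subseteq> colon N (s \<odot>\<^bsub>M\<^esub> y)"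
proof (induction A rule: finite_induct)
  case empty then show ?case using one_in_prime_compl[OF P] by blast
next
  case (insert a A)
  then obtain s where s: "s \<in> carrier R - p" "A \<subseteq> colon N (s \<odot>\<^bsub>M\<^esub> y)" by blast
  have "a \<in> colon (sat p N) y" using insert by auto
  then obtain t where t: "a \<in> carrier R" "t \<in> carrier R - p" "t \<odot>\<^bsub>M\<^esub> (a \<odot>\<^bsub>M\<^esub> y) \<in> N"
    unfolding colon_def sat_def by auto
  have st: "s \<in> carrier R" "t \<in> carrier R" using s t by auto
  have e: "(t \<otimes> s) \<odot>\<^bsub>M\<^esub> y = t \<odot>\<^bsub>M\<^esub> (s \<odot>\<^bsub>M\<^esub> y)" using st y by (simp add: smult_assoc1)
  have "A \<subseteq> colon N ((t \<otimes> s) \<odot>\<^bsub>M\<^esub> y)"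
    using s(2) colon_subset_colon_smult[OF N _ st(2), of "s \<odot>\<^bsub>M\<^esub> y"] st y e by auto
  moreover have "a \<odot>\<^bsub>M\<^esub> ((t \<otimes> s) \<odot>\<^bsub>M\<^esub> y) = s \<odot>\<^bsub>M\<^esub> (t \<odot>\<^bsub>M\<^esub> (a \<odot>\<^bsub>M\<^esub> y))"
    using st t(1) y by (simp add: smult_assoc1[symmetric] m_ac)
  then have "a \<in> colon N ((t \<otimes> s) \<odot>\<^bsub>M\<^esub> y)"
    unfolding colon_def using t submodule_smult_closed[OF N st(1) t(3)] by simp
  ultimately show ?case using prime_compl_mult_closed[OF P t(2) s(1)] by blast
qed

lemma colon_smult_subset_colon_sat:
  assumes N: "submodule N R M" and y: "y \<in> carrier M" and s: "s \<in> carrier R - p"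
  shows "colon N (s \<odot>\<^bsub>M\<^esub> y) \<subseteq> colon (sat p N) y"
proof
  fix b assume "b \<in> colon N (s \<odot>\<^bsub>M\<^esub> y)"
  then have b: "b \<in> carrier R" "b \<odot>\<^bsub>M\<^esub> (s \<odot>\<^bsub>M\<^esub> y) \<in> N" unfolding colon_def by auto
  have "s \<odot>\<^bsub>M\<^esub> (b \<odot>\<^bsub>M\<^esub> y) = b \<odot>\<^bsub>M\<^esub> (s \<odot>\<^bsub>M\<^esub> y)" using b s y by (simp add: smult_assoc1[symmetric] m_comm)
  then show "b \<in> colon (sat p N) y" unfolding colon_def sat_def using b s y by (auto intro!: bexI[of _ s])
qed

end

context noetherian_ring
begin

lemma ex_maximal_ideal:
  assumes "S \<noteq> {}" "\<And>I. I \<in> S \<Longrightarrow> ideal I R"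
  shows "\<exists>I\<in>S. \<forall>J\<in>S. I \<subseteq> J \<longrightarrow> J = I"
proof (rule Zorn_Lemma2, rule ballI)
  fix C assume C: "C \<in> chains S"
  show "\<exists>V\<in>S. \<forall>Y\<in>C. Y \<subseteq> V"
  proof (cases "C = {}")
    case True then show ?thesis using assms(1) by auto
  next
    case False
    have CS: "C \<subseteq> S" and ch: "\<forall>A\<in>C. \<forall>B\<in>C. A \<subseteq> B \<or> B \<subseteq> A"
      using C unfolding chains_def chain_subset_def by auto
    have "subset.chain {I. ideal I R} C"
      unfolding pred_on.chain_def using CS ch assms(2) by blast
    then have "\<Union>C \<in> C" using ideal_chain_is_trivial False by blast
    then show ?thesis using CS by blast
  qed
qed

end

locale noetherian_module = ring_module + noetherian_ring R
begin

lemma ex_prime_colon_smult: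
  assumes N: "submodule N R M" and x: "x \<in> carrier M" "x \<notin> N"
  shows "\<exists>c\<in>carrier R. primeideal (colon N (c \<odot>\<^bsub>M\<^esub> x)) R"
proof -
  define S where "S = {colon N (c \<odot>\<^bsub>M\<^esub> x) | c. c \<in> carrier R \<and> c \<odot>\<^bsub>M\<^esub> x \<notin> N}"
  have "S \<noteq> {}" unfolding S_def using x by (auto intro!: exI[of _ \<one>])
  moreover have "\<And>I. I \<in> S \<Longrightarrow> ideal I R" unfolding S_def using colon_ideal[OF N] x by auto
  ultimately obtain I where I: "I \<in> S" "\<forall>J\<in>S. I \<subseteq> J \<longrightarrow> J = I" using ex_maximal_ideal by blast
  then obtain c where c: "c \<in> carrier R" "c \<odot>\<^bsub>M\<^esub> x \<notin> N" "I = colon N (c \<odot>\<^bsub>M\<^esub> x)"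
    unfolding S_def by blast
  have cx: "c \<odot>\<^bsub>M\<^esub> x \<in> carrier M" using c x by auto
  have "colon N (a \<odot>\<^bsub>M\<^esub> (c \<odot>\<^bsub>M\<^esub> x)) = I"
    if "a \<in> carrier R" "a \<odot>\<^bsub>M\<^esub> (c \<odot>\<^bsub>M\<^esub> x) \<notin> N" for a
  proof -
    have "a \<odot>\<^bsub>M\<^esub> (c \<odot>\<^bsub>M\<^esub> x) = (a \<otimes> c) \<odot>\<^bsub>M\<^esub> x" using that c x by (simp add: smult_assoc1)
    then have "colon N (a \<odot>\<^bsub>M\<^esub> (c \<odot>\<^bsub>M\<^esub> x)) \<in> S" unfolding S_def using that c by force
    then show ?thesis using I(2) colon_subset_colon_smult[OF N cx that(1)] c(3) by blast
  qed
  then have "primeideal (colon N (c \<odot>\<^bsub>M\<^esub> x)) R"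
    using primeideal_colon_if_maximal[OF N cx c(2)] c(3) by blast
  then show ?thesis using c(1) by blast
qed

lemma finite_ass_multiples:
  assumes N: "submodule N R M" and y: "y \<in> carrier M"
  shows "finite (ass_multiples N y)"
proof (rule ccontr)
  assume "infinite (ass_multiples N y)"
  \<comment> \<open>Noetherian induction: pick a counterexample (N0, y0) with maximal ideal (N0 : y0).\<close>
  define BAD where "BAD = {colon N y | N y. submodule N R M \<and> y \<in> carrier M \<and> infinite (ass_multiples N y)}"
  have "BAD \<noteq> {}" unfolding BAD_def using N y \<open>infinite (ass_multiples N y)\<close> by blast
  moreover have "\<And>I. I \<in> BAD \<Longrightarrow> ideal I R" unfolding BAD_def using colon_ideal by blast
  ultimately obtain I0 where I0: "I0 \<in> BAD" "\<forall>J\<in>BAD. I0 \<subseteq> J \<longrightarrow> J = I0" using ex_maximal_ideal by blast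
  then obtain N0 y0 where h: "submodule N0 R M" "y0 \<in> carrier M" "infinite (ass_multiples N0 y0)"
    "I0 = colon N0 y0" unfolding BAD_def by blast
  have "y0 \<notin> N0"
  proof
    assume "y0 \<in> N0"
    then have "ass_multiples N0 y0 = {}"
      using not_primeideal_colon_mem[OF h(1)] submodule_smult_closed[OF h(1)] unfolding ass_multiples_def by blast
    then show False using h(3) by simp
  qed
  then obtain c where c: "c \<in> carrier R" "primeideal (colon N0 (c \<odot>\<^bsub>M\<^esub> y0)) R"
    using ex_prime_colon_smult[OF h(1) h(2)] by blast
  define z where "z = c \<odot>\<^bsub>M\<^esub> y0"
  define N' where "N' = span_insert N0 z"
  have z: "z \<in> carrier M" "primeideal (colon N0 z) R" unfolding z_def using c h(2) by auto
  have N'S: "submodule N' R M" "N0 \<subseteq> N'" "z \<in> N'"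
    unfolding N'_def using span_insert_submodule[OF h(1) z(1)] span_insert_superset[OF h(1) z(1)] by auto
  \<comment> \<open>(N' : y0) contains c, which (N0 : y0) does not, so the pair (N', y0) is no counterexample\<close>
  have "c \<in> colon N' y0" "c \<notin> colon N0 y0"
    using N'S(3) c(1) not_primeideal_colon_mem[OF h(1), of z] z(2) unfolding colon_def z_def by auto
  moreover have "colon N0 y0 \<subseteq> colon N' y0" using N'S(2) unfolding colon_def by auto
  ultimately have "colon N' y0 \<notin> BAD" using I0(2) h(4) by blast
  then have "finite (ass_multiples N' y0)" unfolding BAD_def using N'S(1) h(2) by blast
  moreover have "ass_multiples N0 y0 \<subseteq> insert (colon N0 z) (ass_multiples N' y0)"
  proof
    fix q assume "q \<in> ass_multiples N0 y0"
    then obtain a where a: "primeideal q R" "a \<in> carrier R" "q = colon N0 (a \<odot>\<^bsub>M\<^esub> y0)"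
      unfolding ass_multiples_def by blast
    have ay: "a \<odot>\<^bsub>M\<^esub> y0 \<in> carrier M" using a h(2) by auto
    show "q \<in> insert (colon N0 z) (ass_multiples N' y0)"
      using colon_span_insert_cases[OF h(1) z(1) ay] ass_multiples_eq_prime_colon[OF h(1) z] a
      unfolding N'_def ass_multiples_def by auto
  qed
  ultimately show False using h(3) finite_subset by blast
qed

lemma finite_ass_quot_if_generates:
  "finite T \<Longrightarrow> T \<subseteq> carrier M \<Longrightarrow> submodule N R M \<Longrightarrow>
   (\<forall>H. submodule H R M \<and> N \<union> T \<subseteq> H \<longrightarrow> H = carrier M) \<Longrightarrow> finite (ass_quot R M N)"
proof (induction T arbitrary: N rule: finite_induct)
  case empty
  then have "N = carrier M" by blast
  then show ?case using ass_quot_carrier by simp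
next
  case (insert y T)
  have y: "y \<in> carrier M" using insert(4) by simp
  have N': "submodule (span_insert N y) R M" by (rule span_insert_submodule[OF insert(5) y])
  have "\<forall>H. submodule H R M \<and> span_insert N y \<union> T \<subseteq> H \<longrightarrow> H = carrier M"
    using insert(6) span_insert_superset[OF insert(5) y] by blast
  then have fin: "finite (ass_quot R M (span_insert N y))" using insert(3)[OF _ N'] insert(4) by blast
  have sub: "ass_quot R M N \<subseteq> ass_quot R M (span_insert N y) \<union> ass_multiples N y"
  proof
    fix q assume "q \<in> ass_quot R M N"
    then obtain x where x: "primeideal q R" "x \<in> carrier M" "q = colon N x" unfolding ass_quot_iff by blast
    from colon_span_insert_cases[OF insert(5) y x(2)] x(1,3)
    have "colon (span_insert N y) x = colon N x \<or> q \<in> ass_multiples N y" by simp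
    then show "q \<in> ass_quot R M (span_insert N y) \<union> ass_multiples N y"
    proof
      assume "colon (span_insert N y) x = colon N x"
      then have "q \<in> ass_quot R M (span_insert N y)" using x unfolding ass_quot_iff by auto
      then show ?thesis by simp
    qed simp
  qed
  show ?case by (rule finite_subset[OF sub finite_UnI[OF fin finite_ass_multiples[OF insert(5) y]]])
qed

lemma finite_ass_quot:
  assumes fg: "fin_gen_module R M" and F: "submodule F R M"
  shows "finite (ass_quot R M F)"
proof -
  obtain S where S: "finite S" "S \<subseteq> carrier M" "\<forall>H. submodule H R M \<and> S \<subseteq> H \<longrightarrow> H = carrier M"
    using fg unfolding fin_gen_module_def by blast
  show ?thesis by (rule finite_ass_quot_if_generates[OF S(1) S(2) F]) (use S(3) in blast)
qed

lemma colon_sat_eq_colon_smult: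
  assumes N: "submodule N R M" and P: "primeideal p R" and y: "y \<in> carrier M"
  obtains s where "s \<in> carrier R - p" "colon (sat p N) y = colon N (s \<odot>\<^bsub>M\<^esub> y)"
proof -
  have "ideal (colon (sat p N) y) R" by (rule colon_ideal[OF sat_submodule[OF N P] y])
  then obtain A where A: "A \<subseteq> carrier R" "finite A" "colon (sat p N) y = Idl A"
    using finetely_gen by blast
  moreover have "A \<subseteq> colon (sat p N) y" using A(3) genideal_self[OF A(1)] by simp
  ultimately obtain s where s: "s \<in> carrier R - p" "A \<subseteq> colon N (s \<odot>\<^bsub>M\<^esub> y)"
    using finite_subset_colon_sat[OF N P y] by blast
  have "colon (sat p N) y \<subseteq> colon N (s \<odot>\<^bsub>M\<^esub> y)"
    using A(3) genideal_minimal[OF colon_ideal[OF N] s(2)] s(1) y by simp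
  moreover have "colon N (s \<odot>\<^bsub>M\<^esub> y) \<subseteq> colon (sat p N) y"
    by (rule colon_smult_subset_colon_sat[OF N y s(1)])
  ultimately show thesis by (intro that[OF s(1)] equalityI)
qed

lemma ass_quot_sat_iff:
  assumes N: "submodule N R M" and P: "primeideal p R"
  shows "p \<in> ass_quot R M N \<longleftrightarrow> p \<in> ass_quot R M (sat p N)"
proof
  assume "p \<in> ass_quot R M N"
  then obtain x where x: "x \<in> carrier M" "p = colon N x" unfolding ass_quot_iff by blast
  then have "p = colon (sat p N) x" using colon_sat_eq[OF N P] by simp
  then show "p \<in> ass_quot R M (sat p N)" using P x(1) unfolding ass_quot_iff by blast
next
  assume "p \<in> ass_quot R M (sat p N)"
  then obtain y where y: "y \<in> carrier M" "p = colon (sat p N) y" unfolding ass_quot_iff by blast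
  obtain s where s: "s \<in> carrier R - p" "colon (sat p N) y = colon N (s \<odot>\<^bsub>M\<^esub> y)"
    by (rule colon_sat_eq_colon_smult[OF N P y(1)])
  have "s \<odot>\<^bsub>M\<^esub> y \<in> carrier M" using s y by simp
  moreover have "p = colon N (s \<odot>\<^bsub>M\<^esub> y)" using y(2) s(2) by (rule trans)
  ultimately show "p \<in> ass_quot R M N" using P unfolding ass_quot_iff by blast
qed

end

section \<open>Gluing local submodules\<close>

locale local_submodules = noetherian_module +
  fixes J :: "'a set \<Rightarrow> ('b \<times> 'a) set set"
  assumes J_submodule: "primeideal p R \<Longrightarrow> submodule (J p) (loc_ring R p) (loc_module R M p)"
begin

definition realises :: "'b set \<Rightarrow> bool" where
  "realises F \<longleftrightarrow> submodule F R M \<and> (\<forall>p. primeideal p R \<longrightarrow> loc_sub R M p F = J p)"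

definition consistent :: bool where
  "consistent \<longleftrightarrow> (\<forall>p q. primeideal p R \<and> primeideal q R \<and> p \<subseteq> q \<longrightarrow> J p = loc_sub_at R M p q (J q))"

definition ass_primes :: "'a set set" where
  "ass_primes = {p. primeideal p R \<and> ext_ideal R p p \<in> ass_quot (loc_ring R p) (loc_module R M p) (J p)}"

lemma contr_submodule_J: "primeideal p R \<Longrightarrow> submodule (contr p (J p)) R M"
  using contr_submodule J_submodule by blast

lemma sat_contr_J: "primeideal p R \<Longrightarrow> sat p (contr p (J p)) = contr p (J p)"
  using sat_contr J_submodule by blast

lemma mem_ass_primes_iff: "p \<in> ass_primes \<longleftrightarrow> primeideal p R \<and> p \<in> ass_quot R M (contr p (J p))"
  unfolding ass_primes_def using ass_contr_iff[OF _ J_submodule] by blast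

lemma contr_J_eq_sat: "realises F \<Longrightarrow> primeideal p R \<Longrightarrow> contr p (J p) = sat p F"
  unfolding realises_def using contr_loc_sub by metis

lemma ass_quot_eq_ass_primes:
  assumes F: "realises F"
  shows "ass_quot R M F = ass_primes"
proof (rule Set.set_eqI)
  fix p
  have "p \<in> ass_quot R M F \<longleftrightarrow> p \<in> ass_quot R M (contr p (J p))" if P: "primeideal p R"
    using ass_quot_sat_iff[OF _ P] contr_J_eq_sat[OF F P] F unfolding realises_def by simp
  then show "p \<in> ass_quot R M F \<longleftrightarrow> p \<in> ass_primes"
    unfolding mem_ass_primes_iff using ass_quot_iff by blast
qed

text \<open>If \<open>x \<in> F - F'\<close>, a multiple \<open>c x\<close> has prime annihilator \<open>r\<close> modulo \<open>F'\<close>; but \<open>F\<close> and \<open>F'\<close>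
  have the same saturation at \<open>r\<close>, so some \<open>s \<notin> r\<close> kills \<open>x\<close>, hence \<open>c x\<close>, modulo \<open>F'\<close>.\<close>

lemma realises_subset:
  assumes F: "realises F" and F': "realises F'"
  shows "F \<subseteq> F'"
proof
  fix x assume x: "x \<in> F"
  have F'S: "submodule F' R M" and xc: "x \<in> carrier M"
    using F F' x submodule_subset unfolding realises_def by auto
  show "x \<in> F'"
  proof (rule ccontr)
    assume "x \<notin> F'"
    then obtain c where c: "c \<in> carrier R" "primeideal (colon F' (c \<odot>\<^bsub>M\<^esub> x)) R"
      using ex_prime_colon_smult[OF F'S xc] by blast
    define r where "r = colon F' (c \<odot>\<^bsub>M\<^esub> x)"
    have r: "primeideal r R" using c(2) unfolding r_def .
    have "x \<in> sat r F'"
      using contr_J_eq_sat[OF F r] contr_J_eq_sat[OF F' r] subset_sat[OF _ r] F x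
      unfolding realises_def by blast
    then obtain s where s: "s \<in> carrier R - r" "s \<odot>\<^bsub>M\<^esub> x \<in> F'" unfolding sat_def by blast
    have "s \<odot>\<^bsub>M\<^esub> (c \<odot>\<^bsub>M\<^esub> x) = c \<odot>\<^bsub>M\<^esub> (s \<odot>\<^bsub>M\<^esub> x)"
      using c(1) s(1) xc by (simp add: smult_assoc1[symmetric] m_comm)
    then have "s \<in> r" using submodule_smult_closed[OF F'S c(1) s(2)] s(1) unfolding r_def colon_def by auto
    then show False using s(1) by simp
  qed
qed

lemma consistent_if_realises: "realises F \<Longrightarrow> consistent"
  unfolding consistent_def realises_def using loc_sub_at_loc_sub by metis

lemma finite_ass_primes_if_realises: "fin_gen_module R M \<Longrightarrow> realises F \<Longrightarrow> finite ass_primes"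
  using finite_ass_quot ass_quot_eq_ass_primes unfolding realises_def by metis

lemma contr_J_eq_sat_contr:
  "consistent \<Longrightarrow> primeideal p R \<Longrightarrow> primeideal q R \<Longrightarrow> p \<subseteq> q \<Longrightarrow> contr p (J p) = sat p (contr q (J q))"
  unfolding consistent_def using contr_loc_sub_at[OF _ _ _ J_submodule] by metis

text \<open>Every prime annihilator \<open>r = (F\<^sub>q : z)\<close> of \<open>E/F\<^sub>q\<close>, where \<open>F\<^sub>q\<close> is the contraction of \<open>J(q)\<close>,
  lies in \<open>q\<close>, and consistency gives \<open>F\<^sub>r = sat r F\<^sub>q\<close>, so that \<open>r = (F\<^sub>r : z)\<close>.\<close>

lemma colon_contr_J_in_ass_primes:
  assumes C: consistent and q: "primeideal q R" and z: "z \<in> carrier M"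
    and r: "primeideal (colon (contr q (J q)) z) R"
  shows "colon (contr q (J q)) z \<in> ass_primes"
proof -
  define r' where "r' = colon (contr q (J q)) z"
  have rq: "r' \<subseteq> q"
    using colon_sat_subset[OF contr_submodule_J[OF q] q z] sat_contr_J[OF q] r unfolding r'_def by simp
  have "colon (contr r' (J r')) z = r'"
    using contr_J_eq_sat_contr[OF C r[folded r'_def] q rq]
      colon_sat_eq[OF contr_submodule_J[OF q] r[folded r'_def] z] unfolding r'_def by simp
  then show ?thesis
    using r z unfolding mem_ass_primes_iff ass_quot_iff r'_def by metis
qed

definition glue :: "'b set" where
  "glue = {x \<in> carrier M. \<forall>r\<in>ass_primes. x \<in> contr r (J r)}"

lemma glue_submodule: "submodule glue R M"
proof (rule submoduleI2)
  have S: "r \<in> ass_primes \<Longrightarrow> submodule (contr r (J r)) R M" for r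
    using contr_submodule_J mem_ass_primes_iff by blast
  show "glue \<subseteq> carrier M" unfolding glue_def by auto
  show "\<zero>\<^bsub>M\<^esub> \<in> glue" unfolding glue_def using submodule_zero_closed[OF S] by auto
  show "x \<oplus>\<^bsub>M\<^esub> y \<in> glue" if "x \<in> glue" "y \<in> glue" for x y
    using that submodule_add_closed[OF S] unfolding glue_def by auto
  show "a \<odot>\<^bsub>M\<^esub> x \<in> glue" if "a \<in> carrier R" "x \<in> glue" for a x
    using that submodule_smult_closed[OF S] unfolding glue_def by auto
qed

lemma glue_subset_contr_J:
  assumes C: consistent and q: "primeideal q R"
  shows "glue \<subseteq> contr q (J q)"
proof
  fix y assume yH: "y \<in> glue"
  show "y \<in> contr q (J q)"
  proof (rule ccontr)
    assume "y \<notin> contr q (J q)"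
    moreover have y: "y \<in> carrier M" using yH unfolding glue_def by auto
    ultimately obtain c where c: "c \<in> carrier R" "primeideal (colon (contr q (J q)) (c \<odot>\<^bsub>M\<^esub> y)) R"
      using ex_prime_colon_smult[OF contr_submodule_J[OF q]] by blast
    define r where "r = colon (contr q (J q)) (c \<odot>\<^bsub>M\<^esub> y)"
    have cy: "c \<odot>\<^bsub>M\<^esub> y \<in> carrier M" using c y by simp
    have rA: "r \<in> ass_primes" unfolding r_def using colon_contr_J_in_ass_primes[OF C q cy c(2)] .
    then have rP: "primeideal r R" unfolding mem_ass_primes_iff by blast
    have "c \<odot>\<^bsub>M\<^esub> y \<in> contr r (J r)"
      using yH rA submodule_smult_closed[OF contr_submodule_J[OF rP] c(1)] unfolding glue_def by blast
    moreover have "r \<subseteq> q"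
      using colon_sat_subset[OF contr_submodule_J[OF q] q cy] sat_contr_J[OF q] c(2) unfolding r_def by simp
    ultimately have "c \<odot>\<^bsub>M\<^esub> y \<in> sat r (contr q (J q))"
      using contr_J_eq_sat_contr[OF C rP q] by simp
    then obtain s where "s \<in> carrier R - r" "s \<odot>\<^bsub>M\<^esub> (c \<odot>\<^bsub>M\<^esub> y) \<in> contr q (J q)"
      unfolding sat_def by blast
    then show False unfolding r_def colon_def by auto
  qed
qed

text \<open>A prime annihilator modulo the finite intersection \<open>glue\<close> is an annihilator modulo one
  of the \<open>F\<^sub>r' = contr r' (J r')\<close>, and consistency turns it into its own annihilator modulo
  \<open>F\<^sub>r\<close>.\<close>

lemma colon_contr_J_colon_glue:
  assumes C: consistent and fin: "finite ass_primes" and z: "z \<in> carrier M"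
    and r: "primeideal (colon glue z) R"
  shows "colon (contr (colon glue z) (J (colon glue z))) z = colon glue z"
proof -
  have AP: "r' \<in> ass_primes \<Longrightarrow> primeideal r' R" for r' unfolding mem_ass_primes_iff by blast
  have "colon glue z = carrier R \<inter> (\<Inter>r'\<in>ass_primes. colon (contr r' (J r')) z)"
    using z unfolding glue_def colon_def by blast
  then have "\<exists>r'\<in>ass_primes. colon glue z = colon (contr r' (J r')) z"
    using colon_ideal[OF contr_submodule_J[OF AP] z] r
    by (intro prime_eq_Inter_ideals[OF fin, where K="\<lambda>r'. colon (contr r' (J r')) z"])
  then obtain r' where r': "r' \<in> ass_primes" "colon glue z = colon (contr r' (J r')) z" by blast
  note F' = contr_submodule_J[OF AP[OF r'(1)]]
  have "colon glue z \<subseteq> r'"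
    using colon_sat_subset[OF F' AP[OF r'(1)] z] sat_contr_J[OF AP[OF r'(1)]] r' r by simp
  then have "contr (colon glue z) (J (colon glue z)) = sat (colon glue z) (contr r' (J r'))"
    using contr_J_eq_sat_contr[OF C r AP[OF r'(1)]] by simp
  then show ?thesis using colon_sat_eq[OF F' r z r'(2)] by simp
qed

text \<open>If \<open>x \<in> F\<^sub>p\<close> is not in \<open>sat p glue\<close>, a multiple \<open>c x\<close> has a prime annihilator \<open>r \<subseteq> p\<close>
  modulo \<open>sat p glue\<close>, which is the annihilator of some \<open>z = s c x\<close>, \<open>s \<notin> p\<close>, modulo \<open>glue\<close>.
  But \<open>x \<in> F\<^sub>p \<subseteq> F\<^sub>r\<close> puts \<open>z\<close> into \<open>F\<^sub>r\<close>, whereas \<open>(F\<^sub>r : z) = r\<close> by the previous lemma.\<close>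

lemma sat_glue:
  assumes C: consistent and fin: "finite ass_primes" and P: "primeideal p R"
  shows "sat p glue = contr p (J p)"
proof
  show "sat p glue \<subseteq> contr p (J p)"
    using sat_contr_J[OF P] glue_subset_contr_J[OF C P] unfolding sat_def by blast
  show "contr p (J p) \<subseteq> sat p glue"
  proof
    fix x assume xG: "x \<in> contr p (J p)"
    have xc: "x \<in> carrier M" using xG unfolding contr_def by auto
    show "x \<in> sat p glue"
    proof (rule ccontr)
      assume "x \<notin> sat p glue"
      then obtain c where c: "c \<in> carrier R" "primeideal (colon (sat p glue) (c \<odot>\<^bsub>M\<^esub> x)) R"
        using ex_prime_colon_smult[OF sat_submodule[OF glue_submodule P] xc] by blast
      have cx: "c \<odot>\<^bsub>M\<^esub> x \<in> carrier M" using c xc by simp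
      obtain s where s: "s \<in> carrier R - p"
        "colon (sat p glue) (c \<odot>\<^bsub>M\<^esub> x) = colon glue (s \<odot>\<^bsub>M\<^esub> (c \<odot>\<^bsub>M\<^esub> x))"
        by (rule colon_sat_eq_colon_smult[OF glue_submodule P cx])
      define z where "z = s \<odot>\<^bsub>M\<^esub> (c \<odot>\<^bsub>M\<^esub> x)"
      define r where "r = colon glue z"
      have zc: "z \<in> carrier M" unfolding z_def using s cx by simp
      have rP: "primeideal r R" using c(2) s(2) unfolding r_def z_def by simp
      have "r \<subseteq> p"
        using colon_sat_subset[OF glue_submodule P cx] c(2) s(2) unfolding r_def z_def by simp
      then have "x \<in> contr r (J r)"
        using contr_J_eq_sat_contr[OF C rP P] subset_sat[OF contr_submodule_J[OF P] rP] xG by auto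
      then have "z \<in> contr r (J r)"
        unfolding z_def using submodule_smult_closed[OF contr_submodule_J[OF rP]] c s by auto
      then have "\<one> \<in> colon (contr r (J r)) z" using zc unfolding colon_def by simp
      moreover have "colon (contr r (J r)) z = r"
        using colon_contr_J_colon_glue[OF C fin zc] rP unfolding r_def by simp
      ultimately show False using one_notin_prime[OF rP] by simp
    qed
  qed
qed

lemma realises_glue:
  assumes C: consistent and fin: "finite ass_primes"
  shows "realises glue"
  unfolding realises_def
  using glue_submodule loc_sub_sat[OF _ glue_submodule] sat_glue[OF C fin] loc_sub_contr[OF _ J_submodule]
  by metis

end

theorem lemma3:
  fixes R :: "'a ring" and M :: "('a, 'b) module"
    and J :: "'a set \<Rightarrow> ('b \<times> 'a) set set"
  assumes "noetherian_ring R" and "module R M" and "fin_gen_module R M"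
    and J_sub: "\<And>p. primeideal p R \<Longrightarrow> submodule (J p) (loc_ring R p) (loc_module R M p)"
  defines "\<AA> \<equiv> {p. primeideal p R \<and>
      ext_ideal R p p \<in> ass_quot (loc_ring R p) (loc_module R M p) (J p)}"
  shows "((\<exists>F. submodule F R M \<and> (\<forall>p. primeideal p R \<longrightarrow> loc_sub R M p F = J p))
           \<longleftrightarrow> ((\<forall>p q. primeideal p R \<and> primeideal q R \<and> p \<subseteq> q \<longrightarrow> J p = loc_sub_at R M p q (J q))
                \<and> finite \<AA>))
      \<and> (\<forall>F F'. submodule F R M \<and> (\<forall>p. primeideal p R \<longrightarrow> loc_sub R M p F = J p) \<and>
           submodule F' R M \<and> (\<forall>p. primeideal p R \<longrightarrow> loc_sub R M p F' = J p) \<longrightarrow> F = F')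
      \<and> (\<forall>F. submodule F R M \<and> (\<forall>p. primeideal p R \<longrightarrow> loc_sub R M p F = J p) \<longrightarrow>
           ass_quot R M F = \<AA>)"
proof -
  interpret local_submodules R M J
    using assms(1,2) J_sub
    by (simp add: local_submodules_def local_submodules_axioms_def noetherian_module_def ring_module_def)
  have "(\<exists>F. realises F) \<longleftrightarrow> consistent \<and> finite ass_primes"
    using realises_glue consistent_if_realises finite_ass_primes_if_realises[OF assms(3)] by blast
  moreover have "realises F \<Longrightarrow> realises F' \<Longrightarrow> F = F'" for F F'
    using realises_subset by blast
  ultimately show ?thesis
    using ass_quot_eq_ass_primes
    unfolding \<AA>_def consistent_def[symmetric] ass_primes_def[symmetric] realises_def by blast
qed

end
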